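(* Let $A_1,\dots,A_k\subset\mathbb{N}$ be WM sets and set $\xi_i(n)=1_{A_i}(n)-d(A_i)$ for $n\ge1$ and $\xi_i(n)=0$ for $n\le0$. Let $(a_1,b_1),\dots,(a_k,b_k)\in(\mathbb{Z}\setminus\{0\})^2$ with $a_i>0$ for all $i$ and $a_ib_j-a_jb_i\neq0$ for all $i\neq j$. Then for every $\varepsilon>0$ there is $M(\varepsilon)$ such that for every $M\ge M(\varepsilon)$ there is $N(M,\varepsilon)$ such that for every $N\ge N(M,\varepsilon)$, $\|w\|_N<\varepsilon$, where $w(n)=\frac1M\sum_{m=1}^M\prod_{i=1}^k\xi_i(a_in+b_im)$ for $n=1,\dots,N$.
   Context: For a vector $w$ indexed by $1,\dots,N$, $\|w\|_N^2=\frac1N\sum_{n=1}^Nw(n)^2$. $d(S)=\lim_N\frac1N|S\cap\{1,\dots,N\}|$. $S\subset\mathbb{N}$ is a WM set if, with $\Omega=\{0,1\}^{\mathbb{N}}$, left shift $T$ and $X_{1_S}$ the orbit closure of $1_S$, for some $T$-invariant Borel probability $\mu$ on $X_{1_S}$, $1_S$ is generic for $(X_{1_S},\mu,T)$ (i.e. $\frac1N\sum_{n=0}^{N-1}f(T^n1_S)\to\int f\,d\mu$ for continuous $f$), the system is weakly mixing, and $d(S)>0$. *)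

theory Defs
  imports "HOL-Probability.Probability"
begin

text \<open>Omega = {0,1}^N is modelled as nat => bool (product topology; bool is discrete).
  Position j of a point corresponds to the natural number j+1 (the paper's N = {1,2,...}).\<close>

definition shiftT :: "(nat \<Rightarrow> bool) \<Rightarrow> (nat \<Rightarrow> bool)" where
  "shiftT \<omega> = (\<lambda>j. \<omega> (Suc j))"

definition ind_point :: "nat set \<Rightarrow> (nat \<Rightarrow> bool)" where
  "ind_point S = (\<lambda>j. Suc j \<in> S)"

definition orbit_closure :: "(nat \<Rightarrow> bool) \<Rightarrow> (nat \<Rightarrow> bool) set" where
  "orbit_closure \<omega> = closure (range (\<lambda>n. (shiftT ^^ n) \<omega>))"

definition density_seq :: "nat set \<Rightarrow> nat \<Rightarrow> real" where
  "density_seq S N = real (card (S \<inter> {1..N})) / real N"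

definition dens :: "nat set \<Rightarrow> real" where
  "dens S = lim (density_seq S)"

definition invariant_prob :: "(nat \<Rightarrow> bool) set \<Rightarrow> (nat \<Rightarrow> bool) measure \<Rightarrow> bool" where
  "invariant_prob X \<mu> \<longleftrightarrow>
     prob_space \<mu> \<and> space \<mu> = X \<and> sets \<mu> = sets (restrict_space borel X) \<and>
     shiftT \<in> \<mu> \<rightarrow>\<^sub>M \<mu> \<and>
     (\<forall>A\<in>sets \<mu>. measure \<mu> (shiftT -` A \<inter> space \<mu>) = measure \<mu> A)"

definition generic_for :: "(nat \<Rightarrow> bool) \<Rightarrow> (nat \<Rightarrow> bool) set \<Rightarrow> (nat \<Rightarrow> bool) measure \<Rightarrow> bool" where
  "generic_for \<omega> X \<mu> \<longleftrightarrow>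
     (\<forall>f :: (nat \<Rightarrow> bool) \<Rightarrow> real. continuous_on X f \<longrightarrow>
        (\<lambda>N. (\<Sum>n<N. f ((shiftT ^^ n) \<omega>)) / real N) \<longlonglongrightarrow> integral\<^sup>L \<mu> f)"

definition weakly_mixing :: "(nat \<Rightarrow> bool) measure \<Rightarrow> bool" where
  "weakly_mixing \<mu> \<longleftrightarrow>
     (\<forall>A\<in>sets \<mu>. \<forall>B\<in>sets \<mu>.
        (\<lambda>N. (\<Sum>n<N. \<bar>measure \<mu> ((shiftT ^^ n) -` A \<inter> space \<mu> \<inter> B) - measure \<mu> A * measure \<mu> B\<bar>) / real N)
          \<longlonglongrightarrow> 0)"

definition WM_set :: "nat set \<Rightarrow> bool" where
  "WM_set S \<longleftrightarrow>
     (\<exists>\<mu>. invariant_prob (orbit_closure (ind_point S)) \<mu> \<and>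
          generic_for (ind_point S) (orbit_closure (ind_point S)) \<mu> \<and>
          weakly_mixing \<mu>) \<and>
     convergent (density_seq S) \<and> dens S > 0"

definition xi :: "nat set \<Rightarrow> int \<Rightarrow> real" where
  "xi S x = (if x \<ge> 1 then (if nat x \<in> S then 1 else 0) - dens S else 0)"

definition normN :: "nat \<Rightarrow> (nat \<Rightarrow> real) \<Rightarrow> real" where
  "normN N w = sqrt ((\<Sum>n=1..N. (w n)\<^sup>2) / real N)"

end

theory Submission
  imports Defs
begin

text \<open>Write \<open>w\<close> for the \<open>M\<close>-average in the theorem. A PET induction on the number of factors
  bounds the mean square of \<open>w\<close> eventually by a multiple of an iterated van der Corput norm of
  the first sequence alone: each step applies van der Corput's inequality in \<open>m\<close>, then shifts
  \<open>(n, m)\<close> along \<open>(-b\<^sub>k, a\<^sub>k)\<close>, which fixes the last factor, and removes that factor by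
  Cauchy-Schwarz. The new coefficients \<open>b\<^sub>i a\<^sub>k - a\<^sub>i b\<^sub>k\<close> stay nonzero precisely because
  \<open>a\<^sub>i b\<^sub>j - a\<^sub>j b\<^sub>i \<noteq> 0\<close>. The norm vanishes on \<open>\<xi>\<^sub>1\<close>: writing \<open>\<xi>\<^sub>1(n) = F (T\<^bsup>n-1\<^esub> 1\<^sub>A)\<close>
  with the cylinder function \<open>F \<omega> = [\<omega> 0] - d(A)\<close>, genericity turns averages along
  progressions into integrals of correlations of \<open>F\<close>, and weak mixing makes these correlations
  converge in Cesaro mean to \<open>(\<integral>F)\<^sup>2 = 0\<close>.\<close>

section \<open>Van der Corput's inequality\<close>

lemma abs_sum_shift_nat_le:
  fixes f :: "int \<Rightarrow> real"
  assumes f: "\<And>y. \<bar>f y\<bar> \<le> 1"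
  shows "\<bar>(\<Sum>n=1..N. f (int n + int p)) - (\<Sum>n=1..N. f (int n))\<bar> \<le> 2 * real p"
proof (induction p)
  case (Suc p)
  have "(\<Sum>n=1..N. f (int n + int (Suc p))) - (\<Sum>n=1..N. f (int n + int p))
      = (\<Sum>n=1..N. f (int (Suc n) + int p) - f (int n + int p))"
    by (simp add: sum_subtractf algebra_simps)
  also have "\<dots> = f (int (Suc N) + int p) - f (1 + int p)"
    by (subst sum_Suc_diff) auto
  finally have "\<bar>(\<Sum>n=1..N. f (int n + int (Suc p))) - (\<Sum>n=1..N. f (int n + int p))\<bar> \<le> 2"
    using f[of "int (Suc N) + int p"] f[of "1 + int p"] by linarith
  with Suc show ?case by simp
qed simp

lemma abs_sum_shift_le:
  fixes f :: "int \<Rightarrow> real"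
  assumes f: "\<And>y. \<bar>f y\<bar> \<le> 1"
  shows "\<bar>(\<Sum>n=1..N. f (int n + p)) - (\<Sum>n=1..N. f (int n))\<bar> \<le> 2 * real_of_int \<bar>p\<bar>"
proof (cases "p \<ge> 0")
  case True
  then obtain q where "p = int q" by (metis nonneg_eq_int)
  with abs_sum_shift_nat_le[where f=f and N=N and p=q] f show ?thesis by simp
next
  case False
  define q where "q = nat (- p)"
  have q: "p = - int q" using False unfolding q_def by simp
  have "\<bar>(\<Sum>n=1..N. f (int n - int q + int q)) - (\<Sum>n=1..N. f (int n - int q))\<bar> \<le> 2 * real q"
    using abs_sum_shift_nat_le[where f="\<lambda>y. f (y - int q)" and N=N and p=q] f by simp
  then show ?thesis using q by (simp add: abs_minus_commute)
qed

lemma abs_sum_shift2_le: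
  fixes X :: "int \<Rightarrow> int \<Rightarrow> real"
  assumes X: "\<And>x y. \<bar>X x y\<bar> \<le> 1"
  shows "\<bar>(\<Sum>n=1..N. \<Sum>m=1..M. X (int n + p) (int m + q)) - (\<Sum>n=1..N. \<Sum>m=1..M. X (int n) (int m))\<bar>
         \<le> 2 * real_of_int \<bar>p\<bar> * real M + 2 * real_of_int \<bar>q\<bar> * real N"
proof -
  have "\<bar>(\<Sum>m=1..M. \<Sum>n=1..N. X (int n + p) (int m + q)) - (\<Sum>m=1..M. \<Sum>n=1..N. X (int n) (int m + q))\<bar>
      \<le> (\<Sum>m=1..M. \<bar>(\<Sum>n=1..N. X (int n + p) (int m + q)) - (\<Sum>n=1..N. X (int n) (int m + q))\<bar>)"
    by (simp only: sum_subtractf[symmetric] sum_abs)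
  also have "\<dots> \<le> (\<Sum>m=1..M. 2 * real_of_int \<bar>p\<bar>)"
  proof (rule sum_mono)
    fix m show "\<bar>(\<Sum>n=1..N. X (int n + p) (int m + q)) - (\<Sum>n=1..N. X (int n) (int m + q))\<bar>
        \<le> 2 * real_of_int \<bar>p\<bar>"
      using abs_sum_shift_le[where f="\<lambda>x. X x (int m + q)"] X by simp
  qed
  finally have shift_n: "\<bar>(\<Sum>n=1..N. \<Sum>m=1..M. X (int n + p) (int m + q))
      - (\<Sum>n=1..N. \<Sum>m=1..M. X (int n) (int m + q))\<bar>
      \<le> 2 * real_of_int \<bar>p\<bar> * real M"
    unfolding sum.swap[of _ "{1..N}" "{1..M}"] by (simp add: mult_ac)
  have "\<bar>(\<Sum>n=1..N. \<Sum>m=1..M. X (int n) (int m + q)) - (\<Sum>n=1..N. \<Sum>m=1..M. X (int n) (int m))\<bar>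
      \<le> (\<Sum>n=1..N. \<bar>(\<Sum>m=1..M. X (int n) (int m + q)) - (\<Sum>m=1..M. X (int n) (int m))\<bar>)"
    by (simp only: sum_subtractf[symmetric] sum_abs)
  also have "\<dots> \<le> (\<Sum>n=1..N. 2 * real_of_int \<bar>q\<bar>)"
  proof (rule sum_mono)
    fix n show "\<bar>(\<Sum>m=1..M. X (int n) (int m + q)) - (\<Sum>m=1..M. X (int n) (int m))\<bar>
        \<le> 2 * real_of_int \<bar>q\<bar>"
      using abs_sum_shift_le[where f="X (int n)"] X by simp
  qed
  finally have shift_m: "\<bar>(\<Sum>n=1..N. \<Sum>m=1..M. X (int n) (int m + q)) - (\<Sum>n=1..N. \<Sum>m=1..M. X (int n) (int m))\<bar>
      \<le> 2 * real_of_int \<bar>q\<bar> * real N"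
    by (simp add: mult_ac)
  show ?thesis using shift_n shift_m by linarith
qed

lemma abs_sum_sub_avg_shifts_le:
  fixes u :: "int \<Rightarrow> real"
  assumes u: "\<And>y. \<bar>u y\<bar> \<le> 1" and H: "H \<ge> 1"
  shows "\<bar>(\<Sum>m=1..M. u (int m)) - (\<Sum>h<H. \<Sum>m=1..M. u (int m + int h)) / real H\<bar> \<le> 2 * real H"
proof -
  define S where "S = (\<Sum>m=1..M. u (int m))"
  have "\<bar>S - (\<Sum>h<H. \<Sum>m=1..M. u (int m + int h)) / real H\<bar>
      = \<bar>\<Sum>h<H. S - (\<Sum>m=1..M. u (int m + int h))\<bar> / real H"
    using H by (simp add: sum_subtractf field_simps)
  also have "\<dots> \<le> (\<Sum>h<H. \<bar>S - (\<Sum>m=1..M. u (int m + int h))\<bar>) / real H"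
    by (intro divide_right_mono sum_abs) simp
  also have "\<dots> \<le> (\<Sum>h<H. 2 * real H) / real H"
  proof (intro divide_right_mono sum_mono)
    fix h assume "h \<in> {..<H}"
    then show "\<bar>S - (\<Sum>m=1..M. u (int m + int h))\<bar> \<le> 2 * real H"
      using abs_sum_shift_le[where f=u and N=M and p="int h", OF u] unfolding S_def
      by (simp add: abs_minus_commute)
  qed simp
  finally show ?thesis using H unfolding S_def by simp
qed

lemma van_der_Corput:
  fixes u :: "int \<Rightarrow> real"
  assumes u: "\<And>y. \<bar>u y\<bar> \<le> 1" and H: "H \<ge> 1"
  shows "((\<Sum>m=1..M. u (int m)) / real M)^2
     \<le> (\<Sum>h<H. \<Sum>h'<H. (\<Sum>m=1..M. u (int m + int h) * u (int m + int h')) / real M) / (real H)^2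
        + 4 * real H / real M"
proof -
  define S where "S = (\<Sum>m=1..M. u (int m))"
  define w where "w m = (\<Sum>h<H. u (int m + int h))" for m
  define E where "E = S - (\<Sum>m=1..M. w m) / real H"
  have S_le: "\<bar>S\<bar> \<le> real M"
  proof -
    have "\<bar>S\<bar> \<le> (\<Sum>m=1..M. \<bar>u (int m)\<bar>)" unfolding S_def by (rule sum_abs)
    also have "\<dots> \<le> (\<Sum>m=1..M. 1)" using u by (intro sum_mono) auto
    finally show ?thesis by simp
  qed
  have E_le: "\<bar>E\<bar> \<le> 2 * real H"
    using abs_sum_sub_avg_shifts_le[OF u H, where M=M]
    unfolding E_def S_def w_def sum.swap[of _ "{1..M}"] .
  have "S^2 = (S - E)^2 + 2 * E * S - E^2" by (simp add: power2_eq_square algebra_simps)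
  also have "2 * E * S \<le> 2 * (2 * real H) * real M"
  proof -
    have "E * S \<le> \<bar>E\<bar> * \<bar>S\<bar>" by (metis abs_ge_self abs_mult)
    also have "\<dots> \<le> 2 * real H * real M" using E_le S_le by (intro mult_mono) auto
    finally show ?thesis by simp
  qed
  finally have S_sq: "S^2 \<le> (S - E)^2 + 4 * real H * real M" using zero_le_power2[of E] by linarith
  have "(S - E)^2 = (\<Sum>m=1..M. w m)^2 / (real H)^2"
    unfolding E_def by (simp add: power_divide)
  also have "\<dots> \<le> (\<Sum>m=1..M. (w m)^2) * real M / (real H)^2"
    using sum_squared_le_sum_of_squares[of w "{1..M}"] by (simp add: divide_right_mono)
  also have "(\<Sum>m=1..M. (w m)^2) = (\<Sum>h<H. \<Sum>h'<H. \<Sum>m=1..M. u (int m + int h) * u (int m + int h'))"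
    unfolding w_def power2_eq_square sum_product by (subst sum.swap, rule sum.cong[OF refl], rule sum.swap)
  finally have "S^2 / (real M)^2 \<le> ((\<Sum>h<H. \<Sum>h'<H. \<Sum>m=1..M. u (int m + int h) * u (int m + int h'))
      * real M / (real H)^2 + 4 * real H * real M) / (real M)^2"
    using S_sq by (intro divide_right_mono) auto
  also have "\<dots> = (\<Sum>h<H. \<Sum>h'<H. (\<Sum>m=1..M. u (int m + int h) * u (int m + int h')) / real M) / (real H)^2
      + 4 * real H / real M"
    by (cases "M = 0") (simp_all add: sum_divide_distrib[symmetric] field_simps power2_eq_square)
  finally show ?thesis unfolding S_def by (simp add: power_divide)
qed

definition sq_avg :: "nat \<Rightarrow> nat \<Rightarrow> (int \<Rightarrow> int \<Rightarrow> real) \<Rightarrow> real" where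
  "sq_avg N M u = (\<Sum>n=1..N. ((\<Sum>m=1..M. u (int n) (int m)) / real M)^2) / real N"

lemma sq_avg_nonneg: "sq_avg N M u \<ge> 0"
  unfolding sq_avg_def by (intro divide_nonneg_nonneg sum_nonneg) auto

lemma sq_avg_le_1:
  assumes u: "\<And>x y. \<bar>u x y\<bar> \<le> 1"
  shows "sq_avg N M u \<le> 1"
proof -
  have "((\<Sum>m=1..M. u (int n) (int m)) / real M)^2 \<le> 1" for n
  proof -
    have "\<bar>\<Sum>m=1..M. u (int n) (int m)\<bar> \<le> (\<Sum>m=1..M. 1)"
      using u by (intro order.trans[OF sum_abs] sum_mono) auto
    then have "\<bar>(\<Sum>m=1..M. u (int n) (int m)) / real M\<bar> \<le> 1"
      by (cases "M = 0") (auto simp: divide_le_eq_1)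
    then show ?thesis by (simp add: abs_square_le_1)
  qed
  then have "(\<Sum>n=1..N. ((\<Sum>m=1..M. u (int n) (int m)) / real M)^2) \<le> (\<Sum>n=1..N. 1)"
    by (intro sum_mono)
  then show ?thesis unfolding sq_avg_def by (cases "N = 0") (auto simp: divide_le_eq_1)
qed

lemma van_der_Corput_sq_avg:
  fixes u :: "int \<Rightarrow> int \<Rightarrow> real"
  assumes u: "\<And>x y. \<bar>u x y\<bar> \<le> 1" and H: "H \<ge> 1"
  shows "sq_avg N M u
     \<le> (\<Sum>h<H. \<Sum>h'<H. (\<Sum>n=1..N. \<Sum>m=1..M. u (int n) (int m + int h) * u (int n) (int m + int h'))
          / (real N * real M)) / (real H)^2 + 4 * real H / real M"
proof (cases "N = 0")
  case False
  define X where "X n h h' = (\<Sum>m=1..M. u (int n) (int m + int h) * u (int n) (int m + int h'))" for n h h'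
  have "sq_avg N M u \<le> (\<Sum>n=1..N. (\<Sum>h<H. \<Sum>h'<H. X n h h' / real M) / (real H)^2 + 4 * real H / real M) / real N"
    unfolding sq_avg_def X_def using u H
    by (intro divide_right_mono sum_mono van_der_Corput) auto
  also have "\<dots> = (\<Sum>n=1..N. \<Sum>h<H. \<Sum>h'<H. X n h h') / (real N * real M) / (real H)^2 + 4 * real H / real M"
    using False by (simp add: sum.distrib sum_divide_distrib[symmetric] field_simps)
  also have "(\<Sum>n=1..N. \<Sum>h<H. \<Sum>h'<H. X n h h') = (\<Sum>h<H. \<Sum>h'<H. \<Sum>n=1..N. X n h h')"
    by (subst sum.swap, rule sum.cong[OF refl], rule sum.swap)
  finally show ?thesis
    unfolding X_def by (simp add: sum_divide_distrib)
qed (simp add: sq_avg_def)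

section \<open>Iterated van der Corput norms\<close>

text \<open>For a bounded sequence this is its limit superior; otherwise it is a junk value.\<close>

definition upper_limit :: "(nat \<Rightarrow> real) \<Rightarrow> real" where
  "upper_limit f = Inf {\<beta>. \<forall>\<^sub>F n in sequentially. f n \<le> \<beta>}"

lemma upper_limit_bounds:
  assumes "\<And>n. f n \<in> {A..B}"
  shows "upper_limit f \<in> {A..B}"
proof -
  let ?S = "{\<beta>. \<forall>\<^sub>F n in sequentially. f n \<le> \<beta>}"
  have "B \<in> ?S" using assms by simp
  moreover have "A \<le> \<beta>" if "\<beta> \<in> ?S" for \<beta>
  proof -
    from that obtain n where "f n \<le> \<beta>" by (auto simp: eventually_sequentially)
    with assms[of n] show ?thesis by simp
  qed
  ultimately have "A \<le> Inf ?S" "Inf ?S \<le> B"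
    by (auto intro!: cInf_greatest cInf_lower bdd_belowI)
  then show ?thesis unfolding upper_limit_def by simp
qed

lemma eventually_le_upper_limit:
  assumes "\<And>n. f n \<le> B" and "\<eta> > 0"
  shows "\<forall>\<^sub>F n in sequentially. f n \<le> upper_limit f + \<eta>"
proof -
  let ?S = "{\<beta>. \<forall>\<^sub>F n in sequentially. f n \<le> \<beta>}"
  have "B \<in> ?S" using assms(1) by simp
  then obtain \<beta> where "\<beta> \<in> ?S" "\<beta> < Inf ?S + \<eta>"
    using cInf_lessD[of ?S "Inf ?S + \<eta>"] assms(2) by auto
  then show ?thesis unfolding upper_limit_def by (auto elim: eventually_mono)
qed

lemma upper_limit_le:
  assumes "\<And>n. A \<le> f n" and "\<And>\<eta>. \<eta> > 0 \<Longrightarrow> \<forall>\<^sub>F n in sequentially. f n \<le> x + \<eta>"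
  shows "upper_limit f \<le> x"
proof (rule field_le_epsilon)
  let ?S = "{\<beta>. \<forall>\<^sub>F n in sequentially. f n \<le> \<beta>}"
  have "bdd_below ?S"
  proof (rule bdd_belowI)
    fix \<beta> assume "\<beta> \<in> ?S"
    then obtain n where "f n \<le> \<beta>" by (auto simp: eventually_sequentially)
    with assms(1)[of n] show "A \<le> \<beta>" by simp
  qed
  moreover fix \<eta> :: real assume "\<eta> > 0"
  then have "x + \<eta> \<in> ?S" using assms(2) by simp
  ultimately show "upper_limit f \<le> x + \<eta>" unfolding upper_limit_def by (rule cInf_lower[rotated])
qed

text \<open>The square roots in the recursive case absorb the Cauchy-Schwarz step of the PET induction.\<close>

fun vdc_norm :: "nat list \<Rightarrow> (int \<Rightarrow> real) \<Rightarrow> real" where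
  "vdc_norm [] g = 0"
| "vdc_norm [b] g = upper_limit (\<lambda>M. upper_limit (\<lambda>N. sq_avg N M (\<lambda>y m. g (y + int b * m))))"
| "vdc_norm (b # b' # bs) g = upper_limit (\<lambda>H.
      (\<Sum>h<H. \<Sum>h'<H. sqrt (vdc_norm (b' # bs) (\<lambda>y. g (y + int b * int h) * g (y + int b * int h'))))
        / (real H)^2)"

lemma vdc_norm_induct:
  fixes P :: "nat list \<Rightarrow> (int \<Rightarrow> real) \<Rightarrow> bool"
  assumes "\<And>g. P [] g" and "\<And>b g. P [b] g"
    and "\<And>b b' bs g. (\<And>h h'. P (b' # bs) (\<lambda>y. g (y + int b * int h) * g (y + int b * int h')))
           \<Longrightarrow> P (b # b' # bs) g"
  shows "P bs g"
proof (induction bs g rule: vdc_norm.induct)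
  case (3 b b' bs g)
  show ?case
  proof (rule assms(3))
    fix h h' show "P (b' # bs) (\<lambda>y. g (y + int b * int h) * g (y + int b * int h'))"
      using 3[of h "Suc (max h h')" h'] by simp
  qed
qed (use assms in auto)

lemma grid_avg_bounds:
  assumes "\<And>h h'. \<phi> h h' \<in> {0..1}"
  shows "(\<Sum>h<H. \<Sum>h'<H. \<phi> h h') / (real H)^2 \<in> {0..1}"
proof -
  have "0 \<le> (\<Sum>h<H. \<Sum>h'<H. \<phi> h h')" using assms by (intro sum_nonneg) auto
  moreover have "(\<Sum>h<H. \<Sum>h'<H. \<phi> h h') \<le> (\<Sum>h<H. \<Sum>h'<H. 1)"
    using assms by (intro sum_mono) auto
  ultimately show ?thesis by (cases "H = 0") (auto simp: divide_le_eq_1 power2_eq_square)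
qed

lemma abs_mult_shifts_le_1:
  fixes g :: "int \<Rightarrow> real"
  assumes "\<And>y. \<bar>g y\<bar> \<le> 1"
  shows "\<bar>g (y + p) * g (y + q)\<bar> \<le> 1"
  using assms[of "y + p"] assms[of "y + q"] by (simp add: abs_mult mult_le_one)

lemma sq_avg_progression_bounds:
  assumes "\<And>y. \<bar>g y\<bar> \<le> 1"
  shows "sq_avg N M (\<lambda>y m. g (y + c * m)) \<in> {0..1}"
  using sq_avg_nonneg sq_avg_le_1[of "\<lambda>y m. g (y + c * m)"] assms by auto

lemma vdc_norm_bounds:
  assumes "\<And>y. \<bar>g y\<bar> \<le> 1"
  shows "vdc_norm bs g \<in> {0..1}"
  using assms
proof (induction bs g rule: vdc_norm_induct)
  case (2 b g)
  then have "upper_limit (\<lambda>N. sq_avg N M (\<lambda>y m. g (y + int b * m))) \<in> {0..1}" for M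
    by (intro upper_limit_bounds sq_avg_progression_bounds)
  then show ?case unfolding vdc_norm.simps by (rule upper_limit_bounds)
next
  case (3 b b' bs g)
  have sqrt_01: "sqrt (vdc_norm (b' # bs) (\<lambda>y. g (y + int b * int h) * g (y + int b * int h'))) \<in> {0..1}"
    for h h'
    using 3 abs_mult_shifts_le_1[of g] by auto
  then show ?case unfolding vdc_norm.simps by (intro upper_limit_bounds grid_avg_bounds)
qed simp

lemma eventually_sq_avg_le_vdc_norm_single:
  assumes g: "\<And>y. \<bar>g y\<bar> \<le> 1" and \<eta>: "\<eta> > 0"
  shows "\<forall>\<^sub>F M in sequentially. \<forall>\<^sub>F N in sequentially.
           sq_avg N M (\<lambda>y m. g (y + int b * m)) \<le> vdc_norm [b] g + \<eta>"
proof -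
  let ?Q = "\<lambda>M N. sq_avg N M (\<lambda>y m. g (y + int b * m))"
  have Q: "?Q M N \<in> {0..1}" for M N using sq_avg_progression_bounds g .
  then have "upper_limit (?Q M) \<in> {0..1}" for M by (rule upper_limit_bounds)
  then have "\<forall>\<^sub>F M in sequentially. upper_limit (?Q M) \<le> vdc_norm [b] g + \<eta> / 2"
    unfolding vdc_norm.simps using \<eta> by (intro eventually_le_upper_limit[where B=1]) auto
  then show ?thesis
  proof (rule eventually_mono)
    fix M assume "upper_limit (?Q M) \<le> vdc_norm [b] g + \<eta> / 2"
    moreover have "\<forall>\<^sub>F N in sequentially. ?Q M N \<le> upper_limit (?Q M) + \<eta> / 2"
      using Q \<eta> by (intro eventually_le_upper_limit[where B=1]) auto
    ultimately show "\<forall>\<^sub>F N in sequentially. ?Q M N \<le> vdc_norm [b] g + \<eta>"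
      by (auto elim: eventually_mono)
  qed
qed

lemma vdc_norm_single_le:
  assumes g: "\<And>y. \<bar>g y\<bar> \<le> 1"
    and le: "\<And>\<eta>. \<eta> > 0 \<Longrightarrow> \<forall>\<^sub>F M in sequentially. \<forall>\<^sub>F N in sequentially.
               sq_avg N M (\<lambda>y m. g (y + int b * m)) \<le> x + \<eta>"
  shows "vdc_norm [b] g \<le> x"
  unfolding vdc_norm.simps
proof (rule upper_limit_le[where A=0])
  let ?Q = "\<lambda>M N. sq_avg N M (\<lambda>y m. g (y + int b * m))"
  have Q: "?Q M N \<in> {0..1}" for M N using sq_avg_progression_bounds g .
  show "0 \<le> upper_limit (?Q M)" for M using upper_limit_bounds[of "?Q M"] Q by auto
  fix \<eta> :: real assume "\<eta> > 0"
  then show "\<forall>\<^sub>F M in sequentially. upper_limit (?Q M) \<le> x + \<eta>"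
  proof (rule le[THEN eventually_mono])
    fix M assume "\<forall>\<^sub>F N in sequentially. ?Q M N \<le> x + \<eta>"
    then have "\<forall>\<^sub>F N in sequentially. ?Q M N \<le> x + \<eta> + \<eta>'" if "\<eta>' > 0" for \<eta>'
      using that by (auto elim: eventually_mono)
    then show "upper_limit (?Q M) \<le> x + \<eta>" using Q by (intro upper_limit_le[where A=0]) auto
  qed
qed

lemma eventually_grid_avg_le_vdc_norm:
  assumes g: "\<And>y. \<bar>g y\<bar> \<le> 1" and \<eta>: "\<eta> > 0"
  shows "\<forall>\<^sub>F H in sequentially.
    (\<Sum>h<H. \<Sum>h'<H. sqrt (vdc_norm (b' # bs) (\<lambda>y. g (y + int b * int h) * g (y + int b * int h'))))
      / (real H)^2 \<le> vdc_norm (b # b' # bs) g + \<eta>"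
proof -
  have "sqrt (vdc_norm (b' # bs) (\<lambda>y. g (y + int b * int h) * g (y + int b * int h'))) \<in> {0..1}" for h h'
    using vdc_norm_bounds abs_mult_shifts_le_1[of g] g by auto
  then show ?thesis
    unfolding vdc_norm.simps using \<eta>
    by (intro eventually_le_upper_limit[where B=1]) (use grid_avg_bounds in auto)
qed

lemma vdc_norm_cons_le:
  assumes g: "\<And>y. \<bar>g y\<bar> \<le> 1"
    and le: "\<And>\<eta>. \<eta> > 0 \<Longrightarrow> \<forall>\<^sub>F H in sequentially.
      (\<Sum>h<H. \<Sum>h'<H. sqrt (vdc_norm (b' # bs) (\<lambda>y. g (y + int b * int h) * g (y + int b * int h'))))
        / (real H)^2 \<le> x + \<eta>"
  shows "vdc_norm (b # b' # bs) g \<le> x"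
proof -
  have "sqrt (vdc_norm (b' # bs) (\<lambda>y. g (y + int b * int h) * g (y + int b * int h'))) \<in> {0..1}" for h h'
    using vdc_norm_bounds abs_mult_shifts_le_1[of g] g by auto
  then show ?thesis
    unfolding vdc_norm.simps by (intro upper_limit_le[where A=0] le) (use grid_avg_bounds in auto)
qed

lemma sq_avg_cong:
  assumes "\<And>n m. n \<ge> 1 \<Longrightarrow> m \<ge> 1 \<Longrightarrow> u (int n) (int m) = u' (int n) (int m)"
  shows "sq_avg N M u = sq_avg N M u'"
  unfolding sq_avg_def using assms by (intro arg_cong2[where f="(/)"] sum.cong refl arg_cong2[where f=power]) auto

lemma vdc_norm_cong_pos:
  "(\<And>y. y \<ge> 1 \<Longrightarrow> g y = g' y) \<Longrightarrow> vdc_norm bs g = vdc_norm bs g'"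
proof (induction bs g arbitrary: g' rule: vdc_norm_induct)
  case (2 b g)
  have "sq_avg N M (\<lambda>y m. g (y + int b * m)) = sq_avg N M (\<lambda>y m. g' (y + int b * m))" for N M
    using 2 by (intro sq_avg_cong) (simp add: add_increasing2)
  then show ?case by simp
next
  case (3 b b' bs g)
  have "vdc_norm (b' # bs) (\<lambda>y. g (y + int b * int h) * g (y + int b * int h')) =
        vdc_norm (b' # bs) (\<lambda>y. g' (y + int b * int h) * g' (y + int b * int h'))" for h h'
    using 3 by (intro 3(1)) (simp add: add_increasing2)
  then show ?case by simp
qed simp

section \<open>PET induction\<close>

lemma eventually_div_real_le:
  fixes x \<eta> :: real
  assumes "\<eta> > 0"
  shows "\<forall>\<^sub>F N in sequentially. x / real N \<le> \<eta>"
  using order_tendstoD(2)[OF lim_const_over_n[of x] assms] by (auto elim: eventually_mono)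

lemma sq_avg_reflect: "sq_avg N M u = sq_avg N M (\<lambda>n m. u n (int M + 1 - m))"
proof -
  have "(\<Sum>m=1..M. u n (int m)) = (\<Sum>m=1..M. u n (int M + 1 - int m))" for n
    by (subst sum.atLeastAtMost_rev) (intro sum.cong refl, auto simp: of_nat_diff)
  then show ?thesis unfolding sq_avg_def by simp
qed

lemma real_mult_sq_avg:
  "real N * sq_avg N M u = (\<Sum>n=1..N. ((\<Sum>m=1..M. u (int n) (int m)) / real M)^2)"
  unfolding sq_avg_def by (cases "N = 0") auto

lemma sum_inj_image_le:
  fixes \<phi> :: "'b \<Rightarrow> real"
  assumes "inj_on f A" "f ` A \<subseteq> B" "finite B" "\<And>j. \<phi> j \<ge> 0"
  shows "(\<Sum>y\<in>A. \<phi> (f y)) \<le> (\<Sum>j\<in>B. \<phi> j)"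
  using sum.reindex[OF assms(1), of \<phi>] sum_mono2[OF assms(3,2), of \<phi>] assms(4) by simp

lemma sum_affine_le:
  fixes W :: "int \<Rightarrow> real" and A c :: int
  assumes A: "A \<ge> 1" and W: "\<And>y. W y \<in> {0..1}"
  shows "(\<Sum>n=1..N. W (A * int n + c)) \<le> (\<Sum>y=1..nat (A * int N + c). W (int y)) + real_of_int \<bar>c\<bar>"
proof -
  define P1 where "P1 = {n\<in>{1..N}. A * int n + c \<ge> 1}"
  define P2 where "P2 = {n\<in>{1..N}. A * int n + c < 1}"
  have "{1..N} = P1 \<union> P2" "P1 \<inter> P2 = {}" "finite P1" "finite P2" unfolding P1_def P2_def by auto
  then have "(\<Sum>n=1..N. W (A * int n + c)) = (\<Sum>n\<in>P1. W (A * int n + c)) + (\<Sum>n\<in>P2. W (A * int n + c))"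
    by (metis sum.union_disjoint)
  moreover have "(\<Sum>n\<in>P1. W (A * int n + c)) \<le> (\<Sum>y=1..nat (A * int N + c). W (int y))"
  proof -
    have "(\<Sum>n\<in>P1. W (A * int n + c)) = (\<Sum>n\<in>P1. W (int (nat (A * int n + c))))"
      by (rule sum.cong) (auto simp: P1_def)
    also have "\<dots> \<le> (\<Sum>y=1..nat (A * int N + c). W (int y))"
      using A W unfolding P1_def
      by (intro sum_inj_image_le[where \<phi>="\<lambda>y. W (int y)" and f="\<lambda>n. nat (A * int n + c)"])
        (auto simp: inj_on_def eq_nat_nat_iff intro!: nat_mono mult_left_mono)
    finally show ?thesis .
  qed
  moreover have "(\<Sum>n\<in>P2. W (A * int n + c)) \<le> real_of_int \<bar>c\<bar>"
  proof -
    have "P2 \<subseteq> {1..nat \<bar>c\<bar>}"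
    proof
      fix n assume "n \<in> P2"
      then have "n \<ge> 1" "A * int n + c < 1" unfolding P2_def by auto
      moreover have "int n \<le> A * int n" using A by (simp add: mult_le_cancel_right1)
      ultimately have "n \<ge> 1" "int n \<le> \<bar>c\<bar>" by linarith+
      then show "n \<in> {1..nat \<bar>c\<bar>}" by auto
    qed
    then have "card P2 \<le> nat \<bar>c\<bar>" using card_mono[of "{1..nat \<bar>c\<bar>}"] by fastforce
    moreover have "(\<Sum>n\<in>P2. W (A * int n + c)) \<le> real (card P2)"
      using W sum_mono[of P2 "\<lambda>n. W (A * int n + c)" "\<lambda>_. 1"] by auto
    ultimately show ?thesis by linarith
  qed
  ultimately show ?thesis by linarith
qed

lemma sq_avg_affine_le:
  fixes G :: "int \<Rightarrow> real" and A B c :: int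
  assumes A: "A \<ge> 1" and G: "\<And>y. \<bar>G y\<bar> \<le> 1"
  shows "real N * sq_avg N M (\<lambda>n m. G (A * n + B * m + c))
    \<le> real (nat (A * int N + c)) * sq_avg (nat (A * int N + c)) M (\<lambda>y m. G (y + B * m)) + \<bar>c\<bar>"
proof -
  define W where "W y = ((\<Sum>m=1..M. G (y + B * int m)) / real M)^2" for y
  have "W y = sq_avg 1 M (\<lambda>_ m. G (y + B * m))" for y unfolding W_def sq_avg_def by simp
  then have "W y \<in> {0..1}" for y using sq_avg_nonneg sq_avg_le_1 G by simp
  moreover have "real N * sq_avg N M (\<lambda>n m. G (A * n + B * m + c)) = (\<Sum>n=1..N. W (A * int n + c))"
    unfolding real_mult_sq_avg W_def by (simp add: algebra_simps)
  moreover have "real (nat (A * int N + c)) * sq_avg (nat (A * int N + c)) M (\<lambda>y m. G (y + B * m))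
      = (\<Sum>y=1..nat (A * int N + c). W (int y))"
    unfolding real_mult_sq_avg W_def ..
  ultimately show ?thesis using sum_affine_le[OF A, where W=W and N=N and c=c] by simp
qed

definition nondegenerate :: "nat \<Rightarrow> (nat \<Rightarrow> int) \<Rightarrow> (nat \<Rightarrow> int) \<Rightarrow> bool" where
  "nondegenerate k a b \<longleftrightarrow>
     (\<forall>i<k. a i > 0 \<and> b i \<noteq> 0) \<and> (\<forall>i<k. \<forall>j<k. i \<noteq> j \<longrightarrow> a i * b j - a j * b i \<noteq> 0)"

text \<open>Uniformity in the shifts \<open>c\<close> is needed because the induction step applies the hypothesis
  with shifts depending on \<open>m\<close>.\<close>

definition vdc_controlled :: "nat \<Rightarrow> (nat \<Rightarrow> int) \<Rightarrow> (nat \<Rightarrow> int) \<Rightarrow> bool" where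
  "vdc_controlled k a b \<longleftrightarrow> (\<exists>bs C. C \<ge> 0 \<and> bs \<noteq> [] \<and> (\<forall>x\<in>set bs. x > 0) \<and>
     (\<forall>g :: nat \<Rightarrow> int \<Rightarrow> real. (\<forall>i y. \<bar>g i y\<bar> \<le> 1) \<longrightarrow> (\<forall>\<epsilon>>0.
        \<forall>\<^sub>F M in sequentially. \<forall>c. \<forall>\<^sub>F N in sequentially.
          sq_avg N M (\<lambda>n m. \<Prod>i<k. g i (a i * n + b i * m + c i)) \<le> C * vdc_norm bs (g 0) + \<epsilon>)))"

lemma vdc_controlled_uminus:
  assumes "vdc_controlled k a (\<lambda>i. - b i)"
  shows "vdc_controlled k a b"
proof -
  obtain bs C where bs: "C \<ge> 0" "bs \<noteq> []" "\<forall>x\<in>set bs. x > 0"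
    and ctrl: "\<forall>g :: nat \<Rightarrow> int \<Rightarrow> real. (\<forall>i y. \<bar>g i y\<bar> \<le> 1) \<longrightarrow> (\<forall>\<epsilon>>0.
      \<forall>\<^sub>F M in sequentially. \<forall>c. \<forall>\<^sub>F N in sequentially.
        sq_avg N M (\<lambda>n m. \<Prod>i<k. g i (a i * n + - b i * m + c i)) \<le> C * vdc_norm bs (g 0) + \<epsilon>)"
    using assms unfolding vdc_controlled_def by (elim exE conjE) blast
  have "\<forall>\<^sub>F M in sequentially. \<forall>c. \<forall>\<^sub>F N in sequentially.
      sq_avg N M (\<lambda>n m. \<Prod>i<k. g i (a i * n + b i * m + c i)) \<le> C * vdc_norm bs (g 0) + \<epsilon>"
    if "\<And>i y. \<bar>g i y\<bar> \<le> 1" "\<epsilon> > 0" for g \<epsilon>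
    using ctrl[rule_format, OF that]
  proof (rule eventually_mono, intro allI)
    fix M c
    assume ctrl_M: "\<forall>c. \<forall>\<^sub>F N in sequentially.
      sq_avg N M (\<lambda>n m. \<Prod>i<k. g i (a i * n + - b i * m + c i)) \<le> C * vdc_norm bs (g 0) + \<epsilon>"
    have "sq_avg N M (\<lambda>n m. \<Prod>i<k. g i (a i * n + b i * m + c i)) =
      sq_avg N M (\<lambda>n m. \<Prod>i<k. g i (a i * n + - b i * m + (c i + b i * (int M + 1))))" for N
      by (subst sq_avg_reflect) (simp add: algebra_simps)
    then show "\<forall>\<^sub>F N in sequentially.
      sq_avg N M (\<lambda>n m. \<Prod>i<k. g i (a i * n + b i * m + c i)) \<le> C * vdc_norm bs (g 0) + \<epsilon>"
      using ctrl_M[rule_format, of "\<lambda>i. c i + b i * (int M + 1)"] by simp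
  qed
  with bs show ?thesis unfolding vdc_controlled_def by blast
qed

lemma eventually_sq_avg_affine_le:
  fixes G :: "int \<Rightarrow> real" and A B c :: int and Q \<epsilon> :: real
  assumes A: "A \<ge> 1" and G: "\<And>y. \<bar>G y\<bar> \<le> 1" and Q: "Q \<ge> 0" and \<epsilon>: "\<epsilon> > 0"
    and ev: "\<forall>\<^sub>F Y in sequentially. sq_avg Y M (\<lambda>y m. G (y + B * m)) \<le> Q"
  shows "\<forall>\<^sub>F N in sequentially. sq_avg N M (\<lambda>n m. G (A * n + B * m + c)) \<le> A * Q + \<epsilon>"
proof -
  from ev obtain Y0 where Y0: "\<And>Y. Y \<ge> Y0 \<Longrightarrow> sq_avg Y M (\<lambda>y m. G (y + B * m)) \<le> Q"
    by (auto simp: eventually_sequentially)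
  have "\<forall>\<^sub>F N in sequentially. N \<ge> Y0 + nat \<bar>c\<bar> + 1 \<and> real_of_int \<bar>c\<bar> * (Q + 1) / real N \<le> \<epsilon>"
    using \<epsilon> by (intro eventually_conj eventually_ge_at_top eventually_div_real_le)
  then show ?thesis
  proof (rule eventually_mono)
    fix N assume N: "N \<ge> Y0 + nat \<bar>c\<bar> + 1 \<and> real_of_int \<bar>c\<bar> * (Q + 1) / real N \<le> \<epsilon>"
    define Y where "Y = nat (A * int N + c)"
    have "int N \<le> A * int N" using A by (simp add: mult_le_cancel_right1)
    then have "A * int N + c \<ge> int Y0" using N by linarith
    then have Y: "Y \<ge> Y0" "real Y \<le> A * real N + \<bar>c\<bar>" unfolding Y_def by auto
    have "real N * sq_avg N M (\<lambda>n m. G (A * n + B * m + c)) \<le> real Y * sq_avg Y M (\<lambda>y m. G (y + B * m)) + \<bar>c\<bar>"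
      unfolding Y_def by (rule sq_avg_affine_le[OF A G])
    also have "\<dots> \<le> real Y * Q + \<bar>c\<bar>" using Y0[OF Y(1)] by (simp add: mult_left_mono)
    also have "\<dots> \<le> (A * real N + \<bar>c\<bar>) * Q + \<bar>c\<bar>" using Y(2) Q by (simp add: mult_right_mono)
    finally have "sq_avg N M (\<lambda>n m. G (A * n + B * m + c)) \<le> A * Q + real_of_int \<bar>c\<bar> * (Q + 1) / real N"
      using N by (simp add: field_simps)
    then show "sq_avg N M (\<lambda>n m. G (A * n + B * m + c)) \<le> A * Q + \<epsilon>" using N by linarith
  qed
qed

lemma vdc_controlled_single:
  assumes a: "a 0 > 0" and b: "b 0 > 0"
  shows "vdc_controlled 1 a b"
proof -
  have "\<forall>\<^sub>F M in sequentially. \<forall>c. \<forall>\<^sub>F N in sequentially.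
      sq_avg N M (\<lambda>n m. \<Prod>i<1. g i (a i * n + b i * m + c i)) \<le> a 0 * vdc_norm [nat (b 0)] (g 0) + \<epsilon>"
    if g: "\<forall>i y. \<bar>g i y\<bar> \<le> 1" and \<epsilon>: "\<epsilon> > 0" for g \<epsilon>
  proof -
    define P where "P = vdc_norm [nat (b 0)] (g 0)"
    define \<eta> where "\<eta> = \<epsilon> / (2 * a 0)"
    have "P \<in> {0..1}" unfolding P_def using vdc_norm_bounds g by blast
    then have P: "P \<ge> 0" by simp
    have \<eta>: "\<eta> > 0" "a 0 * (P + \<eta>) + \<epsilon> / 2 = a 0 * P + \<epsilon>" unfolding \<eta>_def using a \<epsilon> by (auto simp: field_simps)
    have "\<forall>\<^sub>F M in sequentially. \<forall>\<^sub>F N in sequentially. sq_avg N M (\<lambda>y m. g 0 (y + b 0 * m)) \<le> P + \<eta>"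
      using eventually_sq_avg_le_vdc_norm_single[of "g 0" \<eta> "nat (b 0)"] g \<eta> b unfolding P_def by simp
    then show ?thesis
    proof (rule eventually_mono, intro allI)
      fix M and c :: "nat \<Rightarrow> int"
      assume "\<forall>\<^sub>F Y in sequentially. sq_avg Y M (\<lambda>y m. g 0 (y + b 0 * m)) \<le> P + \<eta>"
      then have "\<forall>\<^sub>F N in sequentially. sq_avg N M (\<lambda>n m. g 0 (a 0 * n + b 0 * m + c 0)) \<le> a 0 * (P + \<eta>) + \<epsilon> / 2"
        using a g P \<eta> \<epsilon> by (intro eventually_sq_avg_affine_le) auto
      then show "\<forall>\<^sub>F N in sequentially.
        sq_avg N M (\<lambda>n m. \<Prod>i<1. g i (a i * n + b i * m + c i)) \<le> a 0 * vdc_norm [nat (b 0)] (g 0) + \<epsilon>"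
        unfolding P_def[symmetric] \<eta>(2) by simp
    qed
  qed
  then show ?thesis unfolding vdc_controlled_def using b
    by (intro exI[of _ "[nat (b 0)]"] exI[of _ "real_of_int (a 0)"]) (auto simp: less_imp_le a)
qed

lemma abs_sum_sub_avg_diagonal_shifts_le:
  fixes X :: "int \<Rightarrow> int \<Rightarrow> real" and \<alpha> \<beta> :: int
  assumes X: "\<And>x y. \<bar>X x y\<bar> \<le> 1" and T: "T \<ge> 1"
  shows "\<bar>(\<Sum>n=1..N. \<Sum>m=1..M. X (int n) (int m))
      - (\<Sum>t=1..T. \<Sum>n=1..N. \<Sum>m=1..M. X (int n - \<beta> * int t) (int m + \<alpha> * int t)) / real T\<bar>
    \<le> 2 * \<bar>\<beta>\<bar> * real T * real M + 2 * \<bar>\<alpha>\<bar> * real T * real N"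
proof -
  define SX where "SX = (\<Sum>n=1..N. \<Sum>m=1..M. X (int n) (int m))"
  define E where "E = 2 * \<bar>\<beta>\<bar> * real T * real M + 2 * \<bar>\<alpha>\<bar> * real T * real N"
  have shift: "\<bar>SX - (\<Sum>n=1..N. \<Sum>m=1..M. X (int n - \<beta> * int t) (int m + \<alpha> * int t))\<bar> \<le> E"
    if "t \<in> {1..T}" for t
  proof -
    have "\<bar>(\<Sum>n=1..N. \<Sum>m=1..M. X (int n + - \<beta> * int t) (int m + \<alpha> * int t)) - SX\<bar>
        \<le> 2 * \<bar>\<beta> * int t\<bar> * real M + 2 * \<bar>\<alpha> * int t\<bar> * real N"
      unfolding SX_def using abs_sum_shift2_le[OF X, where p="- \<beta> * int t" and q="\<alpha> * int t"] by simp
    also have "\<dots> \<le> E"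
      unfolding E_def using that by (intro add_mono mult_right_mono) (auto simp: abs_mult intro!: mult_left_mono)
    finally show ?thesis by (simp add: abs_minus_commute)
  qed
  have "\<bar>SX - (\<Sum>t=1..T. \<Sum>n=1..N. \<Sum>m=1..M. X (int n - \<beta> * int t) (int m + \<alpha> * int t)) / real T\<bar>
      = \<bar>\<Sum>t=1..T. SX - (\<Sum>n=1..N. \<Sum>m=1..M. X (int n - \<beta> * int t) (int m + \<alpha> * int t))\<bar> / real T"
    using T by (simp add: sum_subtractf field_simps)
  also have "\<dots> \<le> (\<Sum>t=1..T. E) / real T"
    using shift by (intro divide_right_mono order.trans[OF sum_abs] sum_mono) auto
  finally show ?thesis using T unfolding SX_def E_def by simp
qed

lemma sum_abs_le_sqrt_sum_sq:
  fixes Y :: "'a \<Rightarrow> 'b \<Rightarrow> real"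
  shows "(\<Sum>x\<in>A. \<Sum>y\<in>B. \<bar>Y x y\<bar>) \<le> sqrt (real (card A) * real (card B) * (\<Sum>x\<in>A. \<Sum>y\<in>B. (Y x y)^2))"
proof -
  have "(\<Sum>p\<in>A \<times> B. \<bar>Y (fst p) (snd p)\<bar>)^2 \<le> (\<Sum>p\<in>A \<times> B. \<bar>Y (fst p) (snd p)\<bar>^2) * real (card (A \<times> B))"
    by (rule sum_squared_le_sum_of_squares)
  moreover have "(\<Sum>p\<in>A \<times> B. \<bar>Y (fst p) (snd p)\<bar>) = (\<Sum>x\<in>A. \<Sum>y\<in>B. \<bar>Y x y\<bar>)"
    and "(\<Sum>p\<in>A \<times> B. \<bar>Y (fst p) (snd p)\<bar>^2) = (\<Sum>x\<in>A. \<Sum>y\<in>B. (Y x y)^2)"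
    by (simp_all add: sum.cartesian_product split_def)
  ultimately show ?thesis
    by (intro real_le_rsqrt) (simp add: card_cartesian_product mult_ac)
qed

text \<open>Shifting \<open>(n, m)\<close> by \<open>t (-b k, a k)\<close> leaves the argument of the last factor unchanged and
  moves the \<open>i\<close>-th argument by \<open>t (b i a k - a i b k)\<close>; averaging over \<open>t\<close> and applying
  Cauchy-Schwarz in \<open>(n, m)\<close> eliminates the last factor.\<close>

lemma abs_avg_prod_le_reduced:
  fixes G :: "nat \<Rightarrow> int \<Rightarrow> real" and a b c :: "nat \<Rightarrow> int"
  assumes G: "\<And>i y. \<bar>G i y\<bar> \<le> 1" and T: "T \<ge> 1" and NM: "N \<ge> 1" "M \<ge> 1"
  shows "\<bar>\<Sum>n=1..N. \<Sum>m=1..M. \<Prod>i<Suc k. G i (a i * int n + b i * int m + c i)\<bar> / (real N * real M)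
   \<le> sqrt ((\<Sum>m=1..M. sq_avg N T (\<lambda>n t. \<Prod>i<k. G i (a i * n + (b i * a k - a i * b k) * t + (b i * int m + c i))))
           / real M)
     + 2 * \<bar>b k\<bar> * real T / real N + 2 * \<bar>a k\<bar> * real T / real M"
proof -
  define d where "d i = b i * a k - a i * b k" for i
  define X where "X x y = (\<Prod>i<Suc k. G i (a i * x + b i * y + c i))" for x y
  define Y where "Y n m = (\<Sum>t=1..T. \<Prod>i<k. G i (a i * int n + d i * int t + (b i * int m + c i))) / real T"
    for n m
  define Q where "Q = (\<Sum>m=1..M. sq_avg N T (\<lambda>n t. \<Prod>i<k. G i (a i * n + d i * t + (b i * int m + c i))))"
  have X_bound: "\<bar>X x y\<bar> \<le> 1" for x y
    unfolding X_def abs_prod using G by (intro prod_le_1) auto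
  have X_shift: "X (x - b k * t) (y + a k * t)
      = G k (a k * x + b k * y + c k) * (\<Prod>i<k. G i (a i * x + d i * t + (b i * y + c i)))" for x y t
    unfolding X_def d_def by (simp add: algebra_simps)
  have "(\<Sum>t=1..T. \<Sum>n=1..N. \<Sum>m=1..M. X (int n - b k * int t) (int m + a k * int t)) / real T
      = (\<Sum>n=1..N. \<Sum>m=1..M. G k (a k * int n + b k * int m + c k) * Y n m)"
    unfolding X_shift Y_def sum_distrib_left sum_divide_distrib
    by (subst sum.swap, rule sum.cong[OF refl], subst sum.swap) simp
  also have "\<bar>\<dots>\<bar> \<le> (\<Sum>n=1..N. \<Sum>m=1..M. \<bar>Y n m\<bar>)"
    using G by (intro order.trans[OF sum_abs] sum_mono order.trans[OF sum_abs])
      (auto simp: abs_mult intro!: mult_left_le_one_le)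
  also have "\<dots> \<le> sqrt (real N * real M * (\<Sum>n=1..N. \<Sum>m=1..M. (Y n m)^2))"
    using sum_abs_le_sqrt_sum_sq[where Y=Y and A="{1..N}" and B="{1..M}"] by simp
  also have "(\<Sum>n=1..N. \<Sum>m=1..M. (Y n m)^2) = real N * Q"
    unfolding Q_def sq_avg_def Y_def sum_distrib_left using NM
    by (subst sum.swap) (simp add: mult.commute[of "real N"])
  also have "sqrt (real N * real M * (real N * Q)) = real N * real M * sqrt (Q / real M)"
  proof -
    have "real N * real M * (real N * Q) = (real N * real M)^2 * (Q / real M)"
      using NM by (simp add: field_simps power2_eq_square)
    then show ?thesis by (simp only: real_sqrt_mult real_sqrt_abs abs_of_nonneg) simp
  qed
  finally have "\<bar>\<Sum>n=1..N. \<Sum>m=1..M. X (int n) (int m)\<bar> \<le> real N * real M * sqrt (Q / real M)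
      + (2 * \<bar>b k\<bar> * real T * real M + 2 * \<bar>a k\<bar> * real T * real N)"
    using abs_sum_sub_avg_diagonal_shifts_le[where X=X and N=N and M=M and \<alpha>="a k" and \<beta>="b k", OF X_bound T]
    by linarith
  then have "\<bar>\<Sum>n=1..N. \<Sum>m=1..M. X (int n) (int m)\<bar> / (real N * real M) \<le> (real N * real M * sqrt (Q / real M)
      + (2 * \<bar>b k\<bar> * real T * real M + 2 * \<bar>a k\<bar> * real T * real N)) / (real N * real M)"
    by (rule divide_right_mono) simp
  also have "\<dots> = sqrt (Q / real M) + 2 * \<bar>b k\<bar> * real T / real N + 2 * \<bar>a k\<bar> * real T / real M"
    using NM by (simp add: field_simps)
  finally show ?thesis unfolding X_def Q_def d_def .
qed

lemma sqrt_affine_le: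
  assumes "C \<ge> 0" "x \<ge> 0" "\<eta> \<ge> 0"
  shows "sqrt (C * x + \<eta>) \<le> sqrt C * sqrt x + sqrt \<eta>"
  using sqrt_add_le_add_sqrt[of "C * x" \<eta>] assms by (simp add: real_sqrt_mult)

lemma sq_avg_prod_le_differenced:
  fixes g :: "nat \<Rightarrow> int \<Rightarrow> real" and a b c :: "nat \<Rightarrow> int" and \<psi> :: "nat \<Rightarrow> nat \<Rightarrow> real"
  assumes g: "\<And>i y. \<bar>g i y\<bar> \<le> 1" and H: "H \<ge> 1" and T: "T \<ge> 1" and NM: "N \<ge> 1" "M \<ge> 1"
    and C: "C \<ge> 0" and \<eta>: "\<eta> \<ge> 0" and \<psi>: "\<And>h h'. \<psi> h h' \<ge> 0"
    and reduced: "\<And>h h' m. h < H \<Longrightarrow> h' < H \<Longrightarrow> m \<in> {1..M} \<Longrightarrow>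
       sq_avg N T (\<lambda>n t. \<Prod>i<Suc k.
           g i (a i * n + (b i * a (Suc k) - a i * b (Suc k)) * t + (b i * int m + c i) + b i * int h)
         * g i (a i * n + (b i * a (Suc k) - a i * b (Suc k)) * t + (b i * int m + c i) + b i * int h'))
        \<le> C * \<psi> h h' + \<eta>"
  shows "sq_avg N M (\<lambda>n m. \<Prod>i<Suc (Suc k). g i (a i * n + b i * m + c i))
    \<le> sqrt C * ((\<Sum>h<H. \<Sum>h'<H. sqrt (\<psi> h h')) / (real H)^2) + sqrt \<eta>
       + 2 * \<bar>b (Suc k)\<bar> * real T / real N + 2 * \<bar>a (Suc k)\<bar> * real T / real M + 4 * real H / real M"
proof -
  define u where "u x y = (\<Prod>i<Suc (Suc k). g i (a i * x + b i * y + c i))" for x y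
  define Gd where "Gd h h' i y = g i (y + b i * int h) * g i (y + b i * int h')" for h h' :: nat and i y
  define E where "E = 2 * \<bar>b (Suc k)\<bar> * real T / real N + 2 * \<bar>a (Suc k)\<bar> * real T / real M"
  have u: "\<bar>u x y\<bar> \<le> 1" for x y
    unfolding u_def abs_prod using g by (intro prod_le_1) auto
  have Gd: "\<bar>Gd h h' i y\<bar> \<le> 1" for h h' i y
    unfolding Gd_def using g by (simp add: abs_mult mult_le_one)
  have correlation: "(\<Sum>n=1..N. \<Sum>m=1..M. u (int n) (int m + int h) * u (int n) (int m + int h')) / (real N * real M)
      \<le> sqrt C * sqrt (\<psi> h h') + sqrt \<eta> + E" if hh: "h < H" "h' < H" for h h'
  proof -
    have "u (int n) (int m + int h) * u (int n) (int m + int h')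
        = (\<Prod>i<Suc (Suc k). Gd h h' i (a i * int n + b i * int m + c i))" for n m
      unfolding u_def Gd_def by (simp add: prod.distrib[symmetric] algebra_simps)
    then have "(\<Sum>n=1..N. \<Sum>m=1..M. u (int n) (int m + int h) * u (int n) (int m + int h')) / (real N * real M)
        \<le> \<bar>\<Sum>n=1..N. \<Sum>m=1..M. \<Prod>i<Suc (Suc k). Gd h h' i (a i * int n + b i * int m + c i)\<bar>
          / (real N * real M)"
      by (simp add: divide_right_mono)
    also have "\<dots> \<le> sqrt ((\<Sum>m=1..M. sq_avg N T (\<lambda>n t. \<Prod>i<Suc k.
              Gd h h' i (a i * n + (b i * a (Suc k) - a i * b (Suc k)) * t + (b i * int m + c i)))) / real M) + E"
      using abs_avg_prod_le_reduced[where G="Gd h h'" and k="Suc k" and a=a and b=b and c=c, OF Gd T NM]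
      unfolding E_def by linarith
    also have "(\<Sum>m=1..M. sq_avg N T (\<lambda>n t. \<Prod>i<Suc k.
              Gd h h' i (a i * n + (b i * a (Suc k) - a i * b (Suc k)) * t + (b i * int m + c i)))) / real M
        \<le> (\<Sum>m=1..M. C * \<psi> h h' + \<eta>) / real M"
      unfolding Gd_def using reduced[OF hh] by (intro divide_right_mono sum_mono) auto
    also have "\<dots> = C * \<psi> h h' + \<eta>" using NM by simp
    finally show ?thesis
      using sqrt_affine_le[OF C \<psi> \<eta>] real_sqrt_le_mono by (smt (verit))
  qed
  define S where "S = (\<Sum>h<H. \<Sum>h'<H.
    (\<Sum>n=1..N. \<Sum>m=1..M. u (int n) (int m + int h) * u (int n) (int m + int h')) / (real N * real M))"
  have "S \<le> (\<Sum>h<H. \<Sum>h'<H. sqrt C * sqrt (\<psi> h h') + sqrt \<eta> + E)"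
    unfolding S_def using correlation by (intro sum_mono) auto
  also have "\<dots> = sqrt C * (\<Sum>h<H. \<Sum>h'<H. sqrt (\<psi> h h')) + (real H)^2 * (sqrt \<eta> + E)"
    by (simp add: sum.distrib sum_distrib_left power2_eq_square algebra_simps)
  finally have "S / (real H)^2 \<le> (sqrt C * (\<Sum>h<H. \<Sum>h'<H. sqrt (\<psi> h h')) + (real H)^2 * (sqrt \<eta> + E)) / (real H)^2"
    by (rule divide_right_mono) simp
  also have "\<dots> = sqrt C * ((\<Sum>h<H. \<Sum>h'<H. sqrt (\<psi> h h')) / (real H)^2) + sqrt \<eta> + E"
    using H by (simp add: field_simps)
  moreover have "sq_avg N M u \<le> S / (real H)^2 + 4 * real H / real M"
    unfolding S_def by (rule van_der_Corput_sq_avg[where u=u, OF u H])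
  ultimately show ?thesis unfolding u_def E_def by linarith
qed

lemma exists_sqrt_small:
  fixes s \<epsilon> :: real
  assumes "s \<ge> 0" and "\<epsilon> > 0"
  shows "\<exists>\<eta>>0. s * \<eta> + sqrt \<eta> + 2 * \<eta> \<le> \<epsilon>"
proof -
  define \<eta> where "\<eta> = min 1 ((\<epsilon> / (s + 3))^2)"
  have \<eta>: "\<eta> > 0" "\<eta> \<le> 1" using assms unfolding \<eta>_def by auto
  then have le_sqrt: "\<eta> \<le> sqrt \<eta>" by (simp add: real_le_rsqrt power2_eq_square mult_le_cancel_left1)
  have "s * \<eta> + sqrt \<eta> + 2 * \<eta> \<le> (s + 3) * sqrt \<eta>"
    using le_sqrt mult_left_mono[OF le_sqrt assms(1)] by (simp add: algebra_simps)
  also have "\<dots> \<le> (s + 3) * (\<epsilon> / (s + 3))"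
    using real_sqrt_le_mono[of \<eta> "(\<epsilon> / (s + 3))^2"] assms unfolding \<eta>_def by (intro mult_left_mono) auto
  also have "\<dots> = \<epsilon>" using assms by simp
  finally show ?thesis using \<eta> by blast
qed

lemma eventually_sq_avg_prod_le_differenced:
  fixes g :: "nat \<Rightarrow> int \<Rightarrow> real" and a b :: "nat \<Rightarrow> int" and \<psi> :: "nat \<Rightarrow> nat \<Rightarrow> real"
  assumes g: "\<And>i y. \<bar>g i y\<bar> \<le> 1" and H: "H \<ge> 1" and T: "T \<ge> 1"
    and C: "C \<ge> 0" and \<eta>: "\<eta> > 0" and \<psi>: "\<And>h h'. \<psi> h h' \<ge> 0"
    and reduced: "\<And>h h' c. h < H \<Longrightarrow> h' < H \<Longrightarrow> \<forall>\<^sub>F N in sequentially.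
       sq_avg N T (\<lambda>n t. \<Prod>i<Suc k.
           g i (a i * n + (b i * a (Suc k) - a i * b (Suc k)) * t + c i + b i * int h)
         * g i (a i * n + (b i * a (Suc k) - a i * b (Suc k)) * t + c i + b i * int h'))
        \<le> C * \<psi> h h' + \<eta>"
  shows "\<forall>\<^sub>F M in sequentially. \<forall>c. \<forall>\<^sub>F N in sequentially.
    sq_avg N M (\<lambda>n m. \<Prod>i<Suc (Suc k). g i (a i * n + b i * m + c i))
      \<le> sqrt C * ((\<Sum>h<H. \<Sum>h'<H. sqrt (\<psi> h h')) / (real H)^2) + sqrt \<eta> + 2 * \<eta>"
proof -
  have "\<forall>\<^sub>F M in sequentially. M \<ge> 1 \<and> (4 * real H + 2 * \<bar>a (Suc k)\<bar> * real T) / real M \<le> \<eta>"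
    using \<eta> by (intro eventually_conj eventually_ge_at_top eventually_div_real_le)
  then show ?thesis
  proof (rule eventually_mono, intro allI)
    fix M and c :: "nat \<Rightarrow> int"
    assume M: "M \<ge> 1 \<and> (4 * real H + 2 * \<bar>a (Suc k)\<bar> * real T) / real M \<le> \<eta>"
    have "\<forall>\<^sub>F N in sequentially. N \<ge> 1 \<and> 2 * \<bar>b (Suc k)\<bar> * real T / real N \<le> \<eta> \<and>
        (\<forall>q\<in>({..<H} \<times> {..<H}) \<times> {1..M}. sq_avg N T (\<lambda>n t. \<Prod>i<Suc k.
           g i (a i * n + (b i * a (Suc k) - a i * b (Suc k)) * t + (b i * int (snd q) + c i) + b i * int (fst (fst q)))
         * g i (a i * n + (b i * a (Suc k) - a i * b (Suc k)) * t + (b i * int (snd q) + c i) + b i * int (snd (fst q))))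
         \<le> C * \<psi> (fst (fst q)) (snd (fst q)) + \<eta>)" (is "\<forall>\<^sub>F N in sequentially. ?good N")
      using \<eta> reduced
      by (intro eventually_conj eventually_ge_at_top eventually_div_real_le eventually_ball_finite) auto
    then show "\<forall>\<^sub>F N in sequentially. sq_avg N M (\<lambda>n m. \<Prod>i<Suc (Suc k). g i (a i * n + b i * m + c i))
        \<le> sqrt C * ((\<Sum>h<H. \<Sum>h'<H. sqrt (\<psi> h h')) / (real H)^2) + sqrt \<eta> + 2 * \<eta>"
    proof (rule eventually_mono)
      fix N assume N: "?good N"
      have "2 * \<bar>a (Suc k)\<bar> * real T / real M + 4 * real H / real M \<le> \<eta>"
        using M by (simp add: add_divide_distrib[symmetric] add.commute)
      moreover have "sq_avg N M (\<lambda>n m. \<Prod>i<Suc (Suc k). g i (a i * n + b i * m + c i))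
          \<le> sqrt C * ((\<Sum>h<H. \<Sum>h'<H. sqrt (\<psi> h h')) / (real H)^2) + sqrt \<eta>
            + 2 * \<bar>b (Suc k)\<bar> * real T / real N + 2 * \<bar>a (Suc k)\<bar> * real T / real M + 4 * real H / real M"
        using N M \<eta> \<psi> by (intro sq_avg_prod_le_differenced[OF g H T _ _ C]) auto
      ultimately show "sq_avg N M (\<lambda>n m. \<Prod>i<Suc (Suc k). g i (a i * n + b i * m + c i))
          \<le> sqrt C * ((\<Sum>h<H. \<Sum>h'<H. sqrt (\<psi> h h')) / (real H)^2) + sqrt \<eta> + 2 * \<eta>"
        using N by linarith
    qed
  qed
qed

lemma vdc_controlled_step:
  assumes b0: "b 0 > 0" and IH: "vdc_controlled (Suc k) a (\<lambda>i. b i * a (Suc k) - a i * b (Suc k))"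
  shows "vdc_controlled (Suc (Suc k)) a b"
proof -
  define d where "d i = b i * a (Suc k) - a i * b (Suc k)" for i
  obtain bs C where C: "C \<ge> 0" and bs: "bs \<noteq> []" "\<forall>x\<in>set bs. x > 0"
    and ctrl: "\<forall>G :: nat \<Rightarrow> int \<Rightarrow> real. (\<forall>i y. \<bar>G i y\<bar> \<le> 1) \<longrightarrow> (\<forall>\<eta>>0.
        \<forall>\<^sub>F T in sequentially. \<forall>c. \<forall>\<^sub>F N in sequentially.
          sq_avg N T (\<lambda>n t. \<Prod>i<Suc k. G i (a i * n + d i * t + c i)) \<le> C * vdc_norm bs (G 0) + \<eta>)"
    using IH unfolding vdc_controlled_def d_def by (elim exE conjE) blast
  obtain b1 bs1 where bs_Cons: "bs = b1 # bs1" using bs by (cases bs) auto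
  define B where "B = nat (b 0)"
  have B: "int B = b 0" using b0 unfolding B_def by simp
  have "\<forall>\<^sub>F M in sequentially. \<forall>c. \<forall>\<^sub>F N in sequentially.
      sq_avg N M (\<lambda>n m. \<Prod>i<Suc (Suc k). g i (a i * n + b i * m + c i)) \<le> sqrt C * vdc_norm (B # bs) (g 0) + \<epsilon>"
    if g: "\<And>i y. \<bar>g i y\<bar> \<le> 1" and \<epsilon>: "\<epsilon> > 0" for g \<epsilon>
  proof -
    define P where "P = vdc_norm (B # bs) (g 0)"
    define Gd where "Gd h h' i y = g i (y + b i * int h) * g i (y + b i * int h')" for h h' :: nat and i y
    define \<psi> where "\<psi> h h' = vdc_norm bs (Gd h h' 0)" for h h'
    obtain \<eta> where \<eta>: "\<eta> > 0" "sqrt C * \<eta> + sqrt \<eta> + 2 * \<eta> \<le> \<epsilon>"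
      using exists_sqrt_small[OF _ \<epsilon>, of "sqrt C"] C by auto
    have Gd: "\<forall>i y. \<bar>Gd h h' i y\<bar> \<le> 1" for h h' unfolding Gd_def using g by (simp add: abs_mult mult_le_one)
    then have \<psi>: "\<psi> h h' \<ge> 0" for h h' unfolding \<psi>_def using vdc_norm_bounds by simp
    have "\<psi> h h' = vdc_norm (b1 # bs1) (\<lambda>y. g 0 (y + int B * int h) * g 0 (y + int B * int h'))" for h h'
      unfolding \<psi>_def Gd_def bs_Cons B by simp
    then have "\<forall>\<^sub>F H in sequentially. (\<Sum>h<H. \<Sum>h'<H. sqrt (\<psi> h h')) / (real H)^2 \<le> P + \<eta>"
      using eventually_grid_avg_le_vdc_norm[where g="g 0" and b=B and b'=b1 and bs=bs1] g \<eta>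
      unfolding P_def bs_Cons by simp
    then obtain H where H: "H \<ge> 1" "(\<Sum>h<H. \<Sum>h'<H. sqrt (\<psi> h h')) / (real H)^2 \<le> P + \<eta>"
      using eventually_happens'[OF sequentially_bot eventually_conj[OF eventually_ge_at_top]] by blast
    have "\<forall>\<^sub>F T in sequentially. \<forall>p\<in>{..<H} \<times> {..<H}. \<forall>c. \<forall>\<^sub>F N in sequentially.
        sq_avg N T (\<lambda>n t. \<Prod>i<Suc k. Gd (fst p) (snd p) i (a i * n + d i * t + c i)) \<le> C * \<psi> (fst p) (snd p) + \<eta>"
      using ctrl Gd \<eta> unfolding \<psi>_def by (intro eventually_ball_finite) auto
    then obtain T where T: "T \<ge> 1" and "\<forall>p\<in>{..<H} \<times> {..<H}. \<forall>c. \<forall>\<^sub>F N in sequentially.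
        sq_avg N T (\<lambda>n t. \<Prod>i<Suc k. Gd (fst p) (snd p) i (a i * n + d i * t + c i)) \<le> C * \<psi> (fst p) (snd p) + \<eta>"
      using eventually_happens'[OF sequentially_bot eventually_conj[OF eventually_ge_at_top]] by blast
    then have "\<forall>\<^sub>F M in sequentially. \<forall>c. \<forall>\<^sub>F N in sequentially.
        sq_avg N M (\<lambda>n m. \<Prod>i<Suc (Suc k). g i (a i * n + b i * m + c i))
          \<le> sqrt C * ((\<Sum>h<H. \<Sum>h'<H. sqrt (\<psi> h h')) / (real H)^2) + sqrt \<eta> + 2 * \<eta>"
      by (intro eventually_sq_avg_prod_le_differenced[OF g H(1) T C \<eta>(1) \<psi>]) (auto simp: Gd_def d_def)
    moreover have "sqrt C * ((\<Sum>h<H. \<Sum>h'<H. sqrt (\<psi> h h')) / (real H)^2) + sqrt \<eta> + 2 * \<eta> \<le> sqrt C * P + \<epsilon>"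
      using mult_left_mono[OF H(2), of "sqrt C"] \<eta>(2) C by (simp add: algebra_simps)
    ultimately show ?thesis
      unfolding P_def by (elim eventually_mono all_forward) (auto elim: eventually_mono)
  qed
  then show ?thesis
    unfolding vdc_controlled_def using C bs b0 by (intro exI[of _ "B # bs"] exI[of _ "sqrt C"]) (auto simp: B_def)
qed

lemma nondegenerate_reduce:
  assumes "nondegenerate (Suc (Suc k)) a b"
  shows "nondegenerate (Suc k) a (\<lambda>i. b i * a (Suc k) - a i * b (Suc k))"
  unfolding nondegenerate_def
proof (intro conjI allI impI)
  fix i assume i: "i < Suc k"
  then show "a i > 0" using assms unfolding nondegenerate_def by auto
  have "a i * b (Suc k) - a (Suc k) * b i \<noteq> 0" using assms i unfolding nondegenerate_def by auto
  then show "b i * a (Suc k) - a i * b (Suc k) \<noteq> 0" by (simp add: algebra_simps)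
next
  fix i j assume ij: "i < Suc k" "j < Suc k" "i \<noteq> j"
  have "a i * (b j * a (Suc k) - a j * b (Suc k)) - a j * (b i * a (Suc k) - a i * b (Suc k))
      = a (Suc k) * (a i * b j - a j * b i)" by (simp add: algebra_simps)
  moreover have "a i * b j - a j * b i \<noteq> 0" "a (Suc k) > 0" using assms ij unfolding nondegenerate_def by auto
  ultimately show "a i * (b j * a (Suc k) - a j * b (Suc k)) - a j * (b i * a (Suc k) - a i * b (Suc k)) \<noteq> 0"
    by simp
qed

lemma nondegenerate_uminus: "nondegenerate k a b \<Longrightarrow> nondegenerate k a (\<lambda>i. - b i)"
  unfolding nondegenerate_def by (auto simp: algebra_simps)

lemma vdc_controlled_if_nondegenerate:
  "nondegenerate (Suc k) a b \<Longrightarrow> vdc_controlled (Suc k) a b"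
proof (induction k arbitrary: b)
  case 0
  have pos: "vdc_controlled (Suc 0) a b'" if "nondegenerate (Suc 0) a b'" "b' 0 > 0" for b'
    using that vdc_controlled_single unfolding nondegenerate_def by simp
  show ?case
  proof (cases "b 0 > 0")
    case False
    then have "- b 0 > 0" using "0.prems" unfolding nondegenerate_def by auto
    then show ?thesis using pos[OF nondegenerate_uminus[OF "0.prems"]] vdc_controlled_uminus by simp
  qed (use pos "0.prems" in simp)
next
  case (Suc k)
  have pos: "vdc_controlled (Suc (Suc k)) a b'" if "nondegenerate (Suc (Suc k)) a b'" "b' 0 > 0" for b'
    using vdc_controlled_step Suc.IH[OF nondegenerate_reduce] that by blast
  show ?case
  proof (cases "b 0 > 0")
    case False
    then have "- b 0 > 0" using Suc.prems unfolding nondegenerate_def by auto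
    then show ?thesis using pos[OF nondegenerate_uminus[OF Suc.prems]] vdc_controlled_uminus by simp
  qed (use pos Suc.prems in simp)
qed

section \<open>Cylinder functions\<close>

lemma funpow_shiftT: "(shiftT ^^ n) \<omega> = (\<lambda>j. \<omega> (j + n))"
  by (induction n arbitrary: \<omega>) (auto simp: shiftT_def funpow_Suc_right)

definition cylinder_fun :: "((nat \<Rightarrow> bool) \<Rightarrow> real) \<Rightarrow> nat \<Rightarrow> bool" where
  "cylinder_fun F L \<longleftrightarrow> (\<forall>\<omega> \<omega>'. (\<forall>i<L. \<omega> i = \<omega>' i) \<longrightarrow> F \<omega> = F \<omega>')"

definition cylinder :: "nat \<Rightarrow> (nat \<Rightarrow> bool) \<Rightarrow> (nat \<Rightarrow> bool) set" where
  "cylinder L v = {\<omega>. \<forall>i<L. \<omega> i = v i}"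

definition patterns :: "nat \<Rightarrow> (nat \<Rightarrow> bool) set" where
  "patterns L = (\<lambda>s i. i \<in> s) ` Pow {..<L}"

lemma finite_patterns: "finite (patterns L)"
  unfolding patterns_def by simp

lemma open_cylinder: "open (cylinder L v)"
proof -
  have "cylinder L v = (\<Inter>i\<in>{..<L}. (\<lambda>\<omega>. \<omega> i) -` {v i})" unfolding cylinder_def by auto
  also have "open \<dots>"
    by (intro open_INT ballI open_vimage continuous_on_component)
      (simp_all add: discrete_topology_class.open_discrete)
  finally show ?thesis .
qed

lemma cylinder_fun_continuous:
  assumes "cylinder_fun F L"
  shows "continuous_on UNIV F"
  unfolding continuous_on_def
proof (intro ballI tendsto_eventually)
  fix \<omega> :: "nat \<Rightarrow> bool"
  have "\<forall>\<^sub>F \<omega>' in nhds \<omega>. \<omega>' \<in> cylinder L \<omega>"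
    by (rule eventually_nhds_in_open[OF open_cylinder]) (simp add: cylinder_def)
  then show "\<forall>\<^sub>F \<omega>' in at \<omega> within UNIV. F \<omega>' = F \<omega>"
    using assms unfolding cylinder_fun_def cylinder_def
    by (auto simp: eventually_at_filter elim: eventually_mono)
qed

lemma cylinder_fun_shift:
  "cylinder_fun F L \<Longrightarrow> cylinder_fun (\<lambda>\<omega>. F ((shiftT ^^ p) \<omega>)) (L + p)"
  unfolding cylinder_fun_def funpow_shiftT by auto

lemma cylinder_fun_mult:
  assumes "cylinder_fun F L" "cylinder_fun G L'"
  shows "cylinder_fun (\<lambda>\<omega>. F \<omega> * G \<omega>) (max L L')"
  unfolding cylinder_fun_def
proof (intro allI impI)
  fix \<omega> \<omega>' :: "nat \<Rightarrow> bool" assume "\<forall>i<max L L'. \<omega> i = \<omega>' i"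
  then have "F \<omega> = F \<omega>'" "G \<omega> = G \<omega>'" using assms unfolding cylinder_fun_def by auto
  then show "F \<omega> * G \<omega> = F \<omega>' * G \<omega>'" by simp
qed

lemma cylinder_fun_indicator: "cylinder_fun (indicator (cylinder L v)) L"
  unfolding cylinder_fun_def cylinder_def indicator_def by auto

lemma cylinder_fun_eq_sum:
  assumes "cylinder_fun F L"
  shows "F \<omega> = (\<Sum>v\<in>patterns L. F v * indicator (cylinder L v) \<omega>)"
proof -
  define v0 where "v0 i = (i < L \<and> \<omega> i)" for i
  have "v0 \<in> patterns L"
    unfolding patterns_def v0_def by (rule image_eqI[of _ _ "{i. i < L \<and> \<omega> i}"]) auto
  moreover have "\<omega> \<in> cylinder L v \<longleftrightarrow> v = v0" if "v \<in> patterns L" for v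
    using that unfolding patterns_def cylinder_def v0_def by (auto simp: fun_eq_iff)
  moreover have "F v0 = F \<omega>" using assms unfolding cylinder_fun_def v0_def by auto
  ultimately show ?thesis
    by (simp add: indicator_def if_distrib sum.delta' finite_patterns cong: sum.cong)
qed

lemma abs_cylinder_fun_le:
  assumes "cylinder_fun F L"
  shows "\<bar>F \<omega>\<bar> \<le> (\<Sum>v\<in>patterns L. \<bar>F v\<bar>)"
proof -
  have "\<bar>F \<omega>\<bar> \<le> (\<Sum>v\<in>patterns L. \<bar>F v * indicator (cylinder L v) \<omega>\<bar>)"
    by (subst cylinder_fun_eq_sum[OF assms]) (rule sum_abs)
  also have "\<dots> \<le> (\<Sum>v\<in>patterns L. \<bar>F v\<bar>)" by (intro sum_mono) (simp add: indicator_def)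
  finally show ?thesis .
qed

lemma cesaro_null_if_dominated:
  fixes x :: "nat \<Rightarrow> real" and c :: "'a \<Rightarrow> real" and y :: "'a \<Rightarrow> nat \<Rightarrow> real"
  assumes "\<And>n. \<bar>x n\<bar> \<le> (\<Sum>j\<in>J. c j * y j n)" and "finite J"
    and "\<And>j. j \<in> J \<Longrightarrow> (\<lambda>N. (\<Sum>n<N. y j n) / real N) \<longlonglongrightarrow> 0"
  shows "(\<lambda>N. (\<Sum>n<N. \<bar>x n\<bar>) / real N) \<longlonglongrightarrow> 0"
proof (rule tendsto_sandwich[OF _ _ tendsto_const])
  show "(\<lambda>N. \<Sum>j\<in>J. c j * ((\<Sum>n<N. y j n) / real N)) \<longlonglongrightarrow> 0"
    using assms(3) by (intro tendsto_null_sum tendsto_mult_right_zero)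
  have "(\<Sum>n<N. \<bar>x n\<bar>) \<le> (\<Sum>j\<in>J. c j * (\<Sum>n<N. y j n))" for N
  proof -
    have "(\<Sum>n<N. \<bar>x n\<bar>) \<le> (\<Sum>n<N. \<Sum>j\<in>J. c j * y j n)" by (intro sum_mono assms(1))
    also have "\<dots> = (\<Sum>j\<in>J. c j * (\<Sum>n<N. y j n))" by (subst sum.swap) (simp add: sum_distrib_left)
    finally show ?thesis .
  qed
  then have le: "(\<Sum>n<N. \<bar>x n\<bar>) / real N \<le> (\<Sum>j\<in>J. c j * (\<Sum>n<N. y j n)) / real N" for N
    by (rule divide_right_mono) simp
  have eq: "(\<Sum>j\<in>J. c j * (\<Sum>n<N. y j n)) / real N = (\<Sum>j\<in>J. c j * ((\<Sum>n<N. y j n) / real N))" for N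
    by (simp add: sum_divide_distrib sum_distrib_left)
  show "\<forall>\<^sub>F N in sequentially. (\<Sum>n<N. \<bar>x n\<bar>) / real N \<le> (\<Sum>j\<in>J. c j * ((\<Sum>n<N. y j n) / real N))"
    by (intro always_eventually allI) (subst eq[symmetric], rule le)
qed (auto intro: sum_nonneg)

definition absdiff :: "nat \<Rightarrow> nat \<Rightarrow> nat" where
  "absdiff x y = (if x \<le> y then y - x else x - y)"

lemma absdiff_mult: "absdiff (b * x) (b * y) = b * absdiff x y"
  unfolding absdiff_def by (auto simp: diff_mult_distrib2)

lemma sum_absdiff_le:
  fixes \<phi> :: "nat \<Rightarrow> real"
  assumes \<phi>: "\<And>j. \<phi> j \<ge> 0" and x: "x \<in> {lo..<lo + M}"
  shows "(\<Sum>y\<in>{lo..<lo + M}. \<phi> (absdiff x y)) \<le> 2 * (\<Sum>j<M. \<phi> j)"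
proof -
  define I1 where "I1 = {y\<in>{lo..<lo + M}. x \<le> y}"
  define I2 where "I2 = {y\<in>{lo..<lo + M}. y < x}"
  have "{lo..<lo + M} = I1 \<union> I2" "I1 \<inter> I2 = {}" "finite I1" "finite I2" unfolding I1_def I2_def by auto
  then have "(\<Sum>y\<in>{lo..<lo + M}. \<phi> (absdiff x y)) = (\<Sum>y\<in>I1. \<phi> (absdiff x y)) + (\<Sum>y\<in>I2. \<phi> (absdiff x y))"
    by (metis sum.union_disjoint)
  moreover have "(\<Sum>y\<in>I1. \<phi> (absdiff x y)) \<le> (\<Sum>j<M. \<phi> j)"
    using x \<phi> by (intro sum_inj_image_le) (auto simp: I1_def absdiff_def inj_on_def)
  moreover have "(\<Sum>y\<in>I2. \<phi> (absdiff x y)) \<le> (\<Sum>j<M. \<phi> j)"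
    using x \<phi> by (intro sum_inj_image_le) (auto simp: I2_def absdiff_def inj_on_def)
  ultimately show ?thesis by simp
qed

lemma cesaro_null_mult_index:
  fixes \<delta> :: "nat \<Rightarrow> real"
  assumes \<delta>: "\<And>j. \<delta> j \<ge> 0" and lim: "(\<lambda>N. (\<Sum>j<N. \<delta> j) / real N) \<longlonglongrightarrow> 0" and b: "b \<ge> 1"
  shows "(\<lambda>M. (\<Sum>j<M. \<delta> (b * j)) / real M) \<longlonglongrightarrow> 0"
proof (rule tendsto_sandwich[OF _ _ tendsto_const])
  have "strict_mono (\<lambda>M. b * M)" using b by (auto intro!: strict_monoI)
  from LIMSEQ_subseq_LIMSEQ[OF lim this]
  show "(\<lambda>M. real b * ((\<Sum>j<b * M. \<delta> j) / real (b * M))) \<longlonglongrightarrow> 0"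
    by (intro tendsto_mult_right_zero) (simp add: o_def)
  have "(\<Sum>j<M. \<delta> (b * j)) \<le> (\<Sum>j<b * M. \<delta> j)" for M
    using b \<delta> by (intro sum_inj_image_le) (auto simp: inj_on_def)
  then show "\<forall>\<^sub>F M in sequentially. (\<Sum>j<M. \<delta> (b * j)) / real M \<le> real b * ((\<Sum>j<b * M. \<delta> j) / real (b * M))"
    using b by (auto intro!: always_eventually simp: field_simps divide_right_mono)
qed (use \<delta> in \<open>auto intro!: always_eventually divide_nonneg_nonneg sum_nonneg\<close>)

lemma cesaro_null_absdiff:
  fixes \<delta> :: "nat \<Rightarrow> real"
  assumes \<delta>: "\<And>j. \<delta> j \<ge> 0" and lim: "(\<lambda>N. (\<Sum>j<N. \<delta> j) / real N) \<longlonglongrightarrow> 0" and b: "b \<ge> 1"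
  shows "(\<lambda>M. (\<Sum>x\<in>{lo..<lo + M}. \<Sum>y\<in>{lo..<lo + M}. \<delta> (b * absdiff x y)) / (real M)^2) \<longlonglongrightarrow> 0"
proof (rule tendsto_sandwich[OF _ _ tendsto_const])
  show "(\<lambda>M. 2 * ((\<Sum>j<M. \<delta> (b * j)) / real M)) \<longlonglongrightarrow> 0"
    using cesaro_null_mult_index[OF \<delta> lim b] by (rule tendsto_mult_right_zero)
  have "(\<Sum>x\<in>{lo..<lo + M}. \<Sum>y\<in>{lo..<lo + M}. \<delta> (b * absdiff x y)) \<le> (\<Sum>x\<in>{lo..<lo + M}. 2 * (\<Sum>j<M. \<delta> (b * j)))"
    for M using \<delta> by (intro sum_mono sum_absdiff_le[where \<phi>="\<lambda>j. \<delta> (b * j)"]) auto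
  then have "(\<Sum>x\<in>{lo..<lo + M}. \<Sum>y\<in>{lo..<lo + M}. \<delta> (b * absdiff x y)) / (real M)^2
      \<le> 2 * ((\<Sum>j<M. \<delta> (b * j)) / real M)" for M
    by (cases "M = 0") (simp_all add: divide_le_eq power2_eq_square mult_ac)
  then show "\<forall>\<^sub>F M in sequentially. (\<Sum>x\<in>{lo..<lo + M}. \<Sum>y\<in>{lo..<lo + M}. \<delta> (b * absdiff x y)) / (real M)^2
      \<le> 2 * ((\<Sum>j<M. \<delta> (b * j)) / real M)"
    by simp
qed (use \<delta> in \<open>auto intro!: always_eventually divide_nonneg_nonneg sum_nonneg\<close>)

lemma grid_avg_sqrt_le:
  assumes "\<And>h h'. x h h' \<ge> 0"
  shows "(\<Sum>h<H. \<Sum>h'<H. sqrt (x h h')) / (real H)^2 \<le> sqrt ((\<Sum>h<H. \<Sum>h'<H. x h h') / (real H)^2)"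
proof -
  have "(\<Sum>h<H. \<Sum>h'<H. sqrt (x h h')) \<le> sqrt (real H * real H * (\<Sum>h<H. \<Sum>h'<H. (sqrt (x h h'))^2))"
    using sum_abs_le_sqrt_sum_sq[where A="{..<H}" and B="{..<H}" and Y="\<lambda>h h'. sqrt (x h h')"] assms by simp
  also have "\<dots> = real H * sqrt (\<Sum>h<H. \<Sum>h'<H. x h h')"
    using assms by (simp add: real_sqrt_mult)
  finally have "(\<Sum>h<H. \<Sum>h'<H. sqrt (x h h')) / (real H)^2 \<le> real H * sqrt (\<Sum>h<H. \<Sum>h'<H. x h h') / (real H)^2"
    by (simp add: divide_right_mono)
  also have "\<dots> = sqrt ((\<Sum>h<H. \<Sum>h'<H. x h h') / (real H)^2)"
    by (simp add: real_sqrt_divide power2_eq_square)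
  finally show ?thesis .
qed

section \<open>Sequences along the orbit of \<open>1\<^sub>S\<close>\<close>

definition orbit_seq :: "nat set \<Rightarrow> ((nat \<Rightarrow> bool) \<Rightarrow> real) \<Rightarrow> int \<Rightarrow> real" where
  "orbit_seq S F y = (if y \<ge> 1 then F ((shiftT ^^ nat (y - 1)) (ind_point S)) else 0)"

lemma abs_orbit_seq_le: "(\<And>\<omega>. \<bar>F \<omega>\<bar> \<le> 1) \<Longrightarrow> \<bar>orbit_seq S F y\<bar> \<le> 1"
  unfolding orbit_seq_def by auto

lemma orbit_seq_mult_shifts:
  assumes "y \<ge> 1"
  shows "orbit_seq S F (y + int b * int h) * orbit_seq S F (y + int b * int h')
    = orbit_seq S (\<lambda>\<omega>. F ((shiftT ^^ (b * h)) \<omega>) * F ((shiftT ^^ (b * h')) \<omega>)) y"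
proof -
  have "nat (y + int b * int h - 1) = nat (int (b * h) + (y - 1))" for h by simp
  then have "nat (y + int b * int h - 1) = b * h + nat (y - 1)" for h
    using assms by (simp add: nat_add_distrib nat_mult_distrib)
  then show ?thesis
    using assms unfolding orbit_seq_def by (simp add: add_increasing2 funpow_add)
qed

lemma sq_avg_orbit_seq:
  "sq_avg N M (\<lambda>y m. orbit_seq S F (y + int b * m)) =
   (\<Sum>n<N. ((\<Sum>m=1..M. F ((shiftT ^^ (b * m)) ((shiftT ^^ n) (ind_point S)))) / real M)^2) / real N"
proof -
  have "orbit_seq S F (int (Suc n) + int b * int m) = F ((shiftT ^^ (b * m)) ((shiftT ^^ n) (ind_point S)))"
    for n m
  proof -
    have "nat (int (Suc n) + int b * int m - 1) = b * m + n" by (simp add: nat_add_distrib nat_mult_distrib)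
    then show ?thesis unfolding orbit_seq_def by (simp add: funpow_add)
  qed
  then show ?thesis unfolding sq_avg_def by (simp add: sum.atLeast1_atMost_eq del: of_nat_Suc)
qed

lemma density_seq_bounds: "density_seq S N \<in> {0..1}"
proof -
  have "card (S \<inter> {1..N}) \<le> card {1..N}" by (intro card_mono) auto
  then show ?thesis unfolding density_seq_def by (cases "N = 0") (auto simp: divide_le_eq_1)
qed

lemma dens_bounds:
  assumes "convergent (density_seq S)"
  shows "dens S \<in> {0..1}"
proof -
  have "density_seq S \<longlonglongrightarrow> dens S" using assms unfolding dens_def by (simp add: convergent_LIMSEQ_iff)
  then show ?thesis using density_seq_bounds
    by (auto intro: LIMSEQ_le_const[where a=0] LIMSEQ_le_const2[where a=1])
qed

lemma abs_xi_le_1: "convergent (density_seq S) \<Longrightarrow> \<bar>xi S y\<bar> \<le> 1"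
  using dens_bounds unfolding xi_def by fastforce

definition first_coord :: "(nat \<Rightarrow> bool) \<Rightarrow> real" where
  "first_coord \<omega> = (if \<omega> 0 then 1 else 0)"

lemma cylinder_fun_first_coord: "cylinder_fun first_coord 1"
  unfolding cylinder_fun_def first_coord_def by simp

lemma xi_eq_orbit_seq: "xi S = orbit_seq S (\<lambda>\<omega>. first_coord \<omega> - dens S)"
proof
  fix y :: int
  show "xi S y = orbit_seq S (\<lambda>\<omega>. first_coord \<omega> - dens S) y"
  proof (cases "y \<ge> 1")
    case True
    then have "Suc (nat (y - 1)) = nat y" by simp
    with True show ?thesis unfolding xi_def orbit_seq_def first_coord_def funpow_shiftT ind_point_def by simp
  qed (simp add: xi_def orbit_seq_def)
qed

lemma sum_first_coord_orbit:
  "(\<Sum>n<N. first_coord ((shiftT ^^ n) (ind_point S))) = real (card (S \<inter> {1..N}))"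
proof (induction N)
  case (Suc N)
  have "S \<inter> {1..Suc N} = (if Suc N \<in> S then insert (Suc N) (S \<inter> {1..N}) else S \<inter> {1..N})"
    by (auto simp: atLeastAtMostSuc_conv)
  with Suc show ?case by (simp add: first_coord_def funpow_shiftT ind_point_def)
qed simp

section \<open>Generic points of weakly mixing systems\<close>

locale wm_generic =
  fixes S :: "nat set" and \<mu> :: "(nat \<Rightarrow> bool) measure"
  assumes inv: "invariant_prob (orbit_closure (ind_point S)) \<mu>"
    and gen: "generic_for (ind_point S) (orbit_closure (ind_point S)) \<mu>"
    and wm: "weakly_mixing \<mu>"
begin

abbreviation "X \<equiv> orbit_closure (ind_point S)"

lemma prob_space_mu: "prob_space \<mu>" using inv unfolding invariant_prob_def by auto
lemma finite_measure_mu: "finite_measure \<mu>" using prob_space_mu by (rule prob_space.axioms(1))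
lemma space_mu: "space \<mu> = X" using inv unfolding invariant_prob_def by auto
lemma sets_mu: "sets \<mu> = sets (restrict_space borel X)" using inv unfolding invariant_prob_def by auto
lemma shift_measurable: "shiftT \<in> \<mu> \<rightarrow>\<^sub>M \<mu>" using inv unfolding invariant_prob_def by auto
lemma measure_shift_vimage: "A \<in> sets \<mu> \<Longrightarrow> measure \<mu> (shiftT -` A \<inter> space \<mu>) = measure \<mu> A"
  using inv unfolding invariant_prob_def by auto

lemma funpow_shift_measurable: "(shiftT ^^ p) \<in> \<mu> \<rightarrow>\<^sub>M \<mu>"
proof (induction p)
  case 0 then show ?case by simp
next
  case (Suc p)
  have "shiftT \<circ> (shiftT ^^ p) \<in> \<mu> \<rightarrow>\<^sub>M \<mu>" by (rule measurable_comp[OF Suc shift_measurable])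
  then show ?case by (simp only: funpow.simps(2))
qed

lemma funpow_shift_space: "\<omega> \<in> space \<mu> \<Longrightarrow> (shiftT ^^ p) \<omega> \<in> space \<mu>"
  by (rule measurable_space[OF funpow_shift_measurable])

lemma measure_funpow_shift_vimage: "A \<in> sets \<mu> \<Longrightarrow> measure \<mu> ((shiftT ^^ p) -` A \<inter> space \<mu>) = measure \<mu> A"
proof (induction p arbitrary: A)
  case 0 then show ?case by (simp add: Int_absorb2 sets.sets_into_space)
next
  case (Suc p)
  have A': "shiftT -` A \<inter> space \<mu> \<in> sets \<mu>" using measurable_sets[OF shift_measurable Suc.prems] .
  have "(shiftT ^^ Suc p) -` A \<inter> space \<mu> = (shiftT ^^ p) -` (shiftT -` A \<inter> space \<mu>) \<inter> space \<mu>"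
  proof (intro equalityI subsetI)
    fix x assume "x \<in> (shiftT ^^ Suc p) -` A \<inter> space \<mu>"
    then show "x \<in> (shiftT ^^ p) -` (shiftT -` A \<inter> space \<mu>) \<inter> space \<mu>" using funpow_shift_space[of x p] by simp
  next
    fix x assume "x \<in> (shiftT ^^ p) -` (shiftT -` A \<inter> space \<mu>) \<inter> space \<mu>"
    then show "x \<in> (shiftT ^^ Suc p) -` A \<inter> space \<mu>" by simp
  qed
  then have "measure \<mu> ((shiftT ^^ Suc p) -` A \<inter> space \<mu>) = measure \<mu> (shiftT -` A \<inter> space \<mu>)"
    using Suc.IH[OF A'] by simp
  also have "\<dots> = measure \<mu> A" by (rule measure_shift_vimage[OF Suc.prems])
  finally show ?case .
qed

lemma distr_funpow_shift: "distr \<mu> \<mu> (shiftT ^^ p) = \<mu>"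
proof (rule measure_eqI)
  show "sets (distr \<mu> \<mu> (shiftT ^^ p)) = sets \<mu>" by (rule sets_distr)
  fix A assume "A \<in> sets (distr \<mu> \<mu> (shiftT ^^ p))"
  then have A: "A \<in> sets \<mu>" by (simp only: sets_distr)
  have "emeasure (distr \<mu> \<mu> (shiftT ^^ p)) A = emeasure \<mu> ((shiftT ^^ p) -` A \<inter> space \<mu>)"
    by (rule emeasure_distr[OF funpow_shift_measurable A])
  also have "\<dots> = ennreal (measure \<mu> ((shiftT ^^ p) -` A \<inter> space \<mu>))"
    by (rule finite_measure.emeasure_eq_measure[OF finite_measure_mu])
  also have "\<dots> = ennreal (measure \<mu> A)" using measure_funpow_shift_vimage[OF A] by simp
  also have "\<dots> = emeasure \<mu> A" by (rule finite_measure.emeasure_eq_measure[OF finite_measure_mu, symmetric])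
  finally show "emeasure (distr \<mu> \<mu> (shiftT ^^ p)) A = emeasure \<mu> A" .
qed

lemma integral_funpow_shift:
  fixes F :: "(nat \<Rightarrow> bool) \<Rightarrow> real"
  assumes "F \<in> borel_measurable \<mu>"
  shows "(\<integral>\<omega>. F ((shiftT ^^ p) \<omega>) \<partial>\<mu>) = (\<integral>\<omega>. F \<omega> \<partial>\<mu>)"
proof -
  have "(\<integral>\<omega>. F \<omega> \<partial>(distr \<mu> \<mu> (shiftT ^^ p))) = (\<integral>\<omega>. F ((shiftT ^^ p) \<omega>) \<partial>\<mu>)"
    by (rule integral_distr[OF funpow_shift_measurable assms])
  then show ?thesis using distr_funpow_shift by simp
qed

lemma continuous_borel_measurable:
  fixes F :: "(nat \<Rightarrow> bool) \<Rightarrow> real"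
  assumes "continuous_on UNIV F"
  shows "F \<in> borel_measurable \<mu>"
proof -
  have "F \<in> borel_measurable borel" by (rule borel_measurable_continuous_onI[OF assms])
  then have "F \<in> borel_measurable (restrict_space borel X)" by (rule measurable_restrict_space1)
  moreover have eq: "borel_measurable \<mu> = borel_measurable (restrict_space borel X)"
    by (rule measurable_cong_sets[OF sets_mu refl])
  ultimately show ?thesis by (simp only: eq)
qed

lemma generic_avg_tendsto:
  fixes f :: "(nat \<Rightarrow> bool) \<Rightarrow> real"
  assumes "continuous_on UNIV f"
  shows "(\<lambda>N. (\<Sum>n<N. f ((shiftT ^^ n) (ind_point S))) / real N) \<longlonglongrightarrow> (\<integral>\<omega>. f \<omega> \<partial>\<mu>)"
proof -
  have "continuous_on X f" using assms by (rule continuous_on_subset) simp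
  then show ?thesis using gen unfolding generic_for_def by blast
qed

lemma cylinder_fun_measurable: "cylinder_fun F L \<Longrightarrow> F \<in> borel_measurable \<mu>"
  by (rule continuous_borel_measurable[OF cylinder_fun_continuous])

lemma cylinder_fun_integrable:
  assumes "cylinder_fun F L"
  shows "integrable \<mu> F"
  using cylinder_fun_measurable[OF assms] abs_cylinder_fun_le[OF assms]
  by (intro finite_measure.integrable_const_bound[OF finite_measure_mu, where B="\<Sum>v\<in>patterns L. \<bar>F v\<bar>"]) auto

lemma cylinder_in_sets: "cylinder L v \<inter> X \<in> sets \<mu>"
proof -
  have "cylinder L v \<in> sets borel" using open_cylinder by (rule borel_open)
  then have "X \<inter> cylinder L v \<in> sets (restrict_space borel X)" unfolding sets_restrict_space by blast
  then show ?thesis using sets_mu by (simp add: Int_commute)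
qed

lemma integral_indicator_cylinder_corr:
  "(\<integral>\<omega>. indicator (cylinder L v) ((shiftT ^^ n) \<omega>) * indicator (cylinder L w) \<omega> \<partial>\<mu>)
    = measure \<mu> ((shiftT ^^ n) -` (cylinder L v \<inter> X) \<inter> space \<mu> \<inter> (cylinder L w \<inter> X))"
proof -
  have "(shiftT ^^ n) -` cylinder L v \<inter> cylinder L w \<inter> space \<mu>
      = (shiftT ^^ n) -` (cylinder L v \<inter> X) \<inter> space \<mu> \<inter> (cylinder L w \<inter> X)"
    using funpow_shift_space space_mu by auto
  moreover have "(\<lambda>\<omega>. indicator (cylinder L v) ((shiftT ^^ n) \<omega>) * indicator (cylinder L w) \<omega> :: real)
      = indicator ((shiftT ^^ n) -` cylinder L v \<inter> cylinder L w)"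
    by (simp add: fun_eq_iff indicator_inter_arith indicator_vimage)
  ultimately show ?thesis by simp
qed

lemma integral_cylinder_corr:
  assumes F: "cylinder_fun F L" and G: "cylinder_fun G L"
  shows "(\<integral>\<omega>. F ((shiftT ^^ n) \<omega>) * G \<omega> \<partial>\<mu>) = (\<Sum>v\<in>patterns L. \<Sum>w\<in>patterns L. F v * G w *
      measure \<mu> ((shiftT ^^ n) -` (cylinder L v \<inter> X) \<inter> space \<mu> \<inter> (cylinder L w \<inter> X)))"
proof -
  define h where "h v w \<omega> = (indicator (cylinder L v) ((shiftT ^^ n) \<omega>) * indicator (cylinder L w) \<omega> :: real)"
    for v w \<omega>
  have h: "integrable \<mu> (h v w)" for v w
    unfolding h_def
    by (rule cylinder_fun_integrable[OF cylinder_fun_mult[OF cylinder_fun_shift cylinder_fun_indicator]])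
      (rule cylinder_fun_indicator)
  have "F ((shiftT ^^ n) \<omega>) * G \<omega> = (\<Sum>v\<in>patterns L. \<Sum>w\<in>patterns L. F v * G w * h v w \<omega>)" for \<omega>
    unfolding cylinder_fun_eq_sum[OF F, of "(shiftT ^^ n) \<omega>"] cylinder_fun_eq_sum[OF G, of \<omega>] sum_product h_def
    by (intro sum.cong refl) (simp only: mult_ac)
  then have "(\<integral>\<omega>. F ((shiftT ^^ n) \<omega>) * G \<omega> \<partial>\<mu>) = (\<Sum>v\<in>patterns L. \<Sum>w\<in>patterns L. F v * G w * (\<integral>\<omega>. h v w \<omega> \<partial>\<mu>))"
    using h by (simp add: Bochner_Integration.integral_sum)
  then show ?thesis unfolding h_def integral_indicator_cylinder_corr .
qed

lemma integral_cylinder_fun: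
  assumes F: "cylinder_fun F L"
  shows "(\<integral>\<omega>. F \<omega> \<partial>\<mu>) = (\<Sum>v\<in>patterns L. F v * measure \<mu> (cylinder L v \<inter> X))"
proof -
  have "(\<integral>\<omega>. F \<omega> \<partial>\<mu>) = (\<integral>\<omega>. (\<Sum>v\<in>patterns L. F v * indicator (cylinder L v) \<omega>) \<partial>\<mu>)"
    by (subst cylinder_fun_eq_sum[OF F]) (rule refl)
  also have "\<dots> = (\<Sum>v\<in>patterns L. \<integral>\<omega>. F v * indicator (cylinder L v) \<omega> \<partial>\<mu>)"
    by (rule Bochner_Integration.integral_sum) (use cylinder_fun_integrable[OF cylinder_fun_indicator] in auto)
  also have "\<dots> = (\<Sum>v\<in>patterns L. F v * measure \<mu> (cylinder L v \<inter> X))" using space_mu by simp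
  finally show ?thesis .
qed

lemma weakly_mixing_cylinder_fun:
  assumes F: "cylinder_fun F L" and G: "cylinder_fun G L"
  shows "(\<lambda>N. (\<Sum>n<N. \<bar>(\<integral>\<omega>. F ((shiftT ^^ n) \<omega>) * G \<omega> \<partial>\<mu>)
      - (\<integral>\<omega>. F \<omega> \<partial>\<mu>) * (\<integral>\<omega>. G \<omega> \<partial>\<mu>)\<bar>) / real N) \<longlonglongrightarrow> 0"
proof -
  define m where
    "m n v w = measure \<mu> ((shiftT ^^ n) -` (cylinder L v \<inter> X) \<inter> space \<mu> \<inter> (cylinder L w \<inter> X))" for n v w
  define mv where "mv v = measure \<mu> (cylinder L v \<inter> X)" for v
  have "(\<integral>\<omega>. F \<omega> \<partial>\<mu>) * (\<integral>\<omega>. G \<omega> \<partial>\<mu>) = (\<Sum>v\<in>patterns L. \<Sum>w\<in>patterns L. F v * G w * (mv v * mv w))"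
    unfolding integral_cylinder_fun[OF F] integral_cylinder_fun[OF G] mv_def sum_product by (simp add: mult_ac)
  then have "\<bar>(\<integral>\<omega>. F ((shiftT ^^ n) \<omega>) * G \<omega> \<partial>\<mu>) - (\<integral>\<omega>. F \<omega> \<partial>\<mu>) * (\<integral>\<omega>. G \<omega> \<partial>\<mu>)\<bar>
      = \<bar>\<Sum>v\<in>patterns L. \<Sum>w\<in>patterns L. F v * G w * (m n v w - mv v * mv w)\<bar>" for n
    unfolding integral_cylinder_corr[OF F G] m_def[symmetric] by (simp add: sum_subtractf right_diff_distrib)
  also have "\<dots> n \<le> (\<Sum>p\<in>patterns L \<times> patterns L.
      \<bar>F (fst p) * G (snd p)\<bar> * \<bar>m n (fst p) (snd p) - mv (fst p) * mv (snd p)\<bar>)" for n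
    by (auto simp: sum.cartesian_product split_def abs_mult intro!: order.trans[OF sum_abs] sum_mono)
  finally show ?thesis
  proof (rule cesaro_null_if_dominated[where c="\<lambda>p. \<bar>F (fst p) * G (snd p)\<bar>"
        and y="\<lambda>p n. \<bar>m n (fst p) (snd p) - mv (fst p) * mv (snd p)\<bar>"])
    show "finite (patterns L \<times> patterns L)" by (simp add: finite_patterns)
    fix p assume "p \<in> patterns L \<times> patterns L"
    then have "fst p \<in> patterns L" "snd p \<in> patterns L" by auto
    then show "(\<lambda>N. (\<Sum>n<N. \<bar>m n (fst p) (snd p) - mv (fst p) * mv (snd p)\<bar>) / real N) \<longlonglongrightarrow> 0"
      using wm cylinder_in_sets unfolding weakly_mixing_def m_def mv_def by blast
  qed
qed

lemma integral_shift_corr_le: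
  assumes F: "cylinder_fun F L" and "p \<le> q"
  shows "(\<integral>\<omega>. F ((shiftT ^^ p) \<omega>) * F ((shiftT ^^ q) \<omega>) \<partial>\<mu>) = (\<integral>\<omega>. F ((shiftT ^^ (q - p)) \<omega>) * F \<omega> \<partial>\<mu>)"
proof -
  define H where "H \<omega> = F ((shiftT ^^ (q - p)) \<omega>) * F \<omega>" for \<omega>
  have "H \<in> borel_measurable \<mu>"
    unfolding H_def by (rule cylinder_fun_measurable[OF cylinder_fun_mult[OF cylinder_fun_shift[OF F] F]])
  moreover have "(shiftT ^^ q) \<omega> = (shiftT ^^ (q - p)) ((shiftT ^^ p) \<omega>)" for \<omega>
    using assms(2) by (simp add: funpow_shiftT)
  ultimately show ?thesis
    using integral_funpow_shift[of H p] unfolding H_def by (simp add: mult.commute)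
qed

lemma integral_shift_corr:
  assumes F: "cylinder_fun F L"
  shows "(\<integral>\<omega>. F ((shiftT ^^ p) \<omega>) * F ((shiftT ^^ q) \<omega>) \<partial>\<mu>) = (\<integral>\<omega>. F ((shiftT ^^ absdiff p q) \<omega>) * F \<omega> \<partial>\<mu>)"
proof (cases "p \<le> q")
  case False
  then show ?thesis
    using integral_shift_corr_le[OF F, of q p] by (simp add: absdiff_def mult.commute)
qed (simp add: integral_shift_corr_le[OF F] absdiff_def)

lemma abs_integral_le_1:
  assumes F: "cylinder_fun F L" and F1: "\<And>\<omega>. \<bar>F \<omega>\<bar> \<le> 1"
  shows "\<bar>\<integral>\<omega>. F \<omega> \<partial>\<mu>\<bar> \<le> 1"
proof -
  have "(\<integral>\<omega>. F \<omega> \<partial>\<mu>) \<le> 1"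
    using F1 cylinder_fun_integrable[OF F]
    by (intro prob_space.integral_le_const[OF prob_space_mu]) (auto simp: abs_le_iff)
  moreover have "(\<integral>\<omega>. - F \<omega> \<partial>\<mu>) \<le> 1"
    using F1 cylinder_fun_integrable[OF F]
    by (intro prob_space.integral_le_const[OF prob_space_mu]) (auto simp: abs_le_iff)
  ultimately show ?thesis by auto
qed

lemma cesaro_null_corr:
  assumes F: "cylinder_fun F L"
  shows "(\<lambda>N. (\<Sum>j<N. \<bar>(\<integral>\<omega>. F ((shiftT ^^ j) \<omega>) * F \<omega> \<partial>\<mu>) - (\<integral>\<omega>. F \<omega> \<partial>\<mu>)^2\<bar>) / real N) \<longlonglongrightarrow> 0"
  using weakly_mixing_cylinder_fun[OF F F] by (simp add: power2_eq_square)

lemma integral_sq_avg_shifts_le: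
  assumes F: "cylinder_fun F L" and M: "M \<ge> 1"
  shows "(\<integral>\<omega>. ((\<Sum>m=1..M. F ((shiftT ^^ (b * m)) \<omega>)) / real M)^2 \<partial>\<mu>) \<le> (\<integral>\<omega>. F \<omega> \<partial>\<mu>)^2
    + (\<Sum>m=1..M. \<Sum>m'=1..M. \<bar>(\<integral>\<omega>. F ((shiftT ^^ (b * absdiff m m')) \<omega>) * F \<omega> \<partial>\<mu>) - (\<integral>\<omega>. F \<omega> \<partial>\<mu>)^2\<bar>)
      / (real M)^2"
proof -
  define c where "c j = (\<integral>\<omega>. F ((shiftT ^^ j) \<omega>) * F \<omega> \<partial>\<mu>)" for j
  define I where "I = (\<integral>\<omega>. F \<omega> \<partial>\<mu>)"
  have int: "integrable \<mu> (\<lambda>\<omega>. F ((shiftT ^^ (b * m)) \<omega>) * F ((shiftT ^^ (b * m')) \<omega>))" for m m'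
    by (rule cylinder_fun_integrable[OF cylinder_fun_mult[OF cylinder_fun_shift[OF F] cylinder_fun_shift[OF F]]])
  have "(\<integral>\<omega>. ((\<Sum>m=1..M. F ((shiftT ^^ (b * m)) \<omega>)) / real M)^2 \<partial>\<mu>)
      = (\<integral>\<omega>. (\<Sum>m=1..M. \<Sum>m'=1..M. F ((shiftT ^^ (b * m)) \<omega>) * F ((shiftT ^^ (b * m')) \<omega>)) \<partial>\<mu>) / (real M)^2"
    by (simp add: power_divide power2_eq_square sum_product)
  also have "\<dots> = (\<Sum>m=1..M. \<Sum>m'=1..M. c (b * absdiff m m')) / (real M)^2"
    using int by (simp add: Bochner_Integration.integral_sum c_def integral_shift_corr[OF F] absdiff_mult)
  also have "\<dots> \<le> (\<Sum>m=1..M. \<Sum>m'=1..M. I^2 + \<bar>c (b * absdiff m m') - I^2\<bar>) / (real M)^2"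
    by (intro divide_right_mono sum_mono) auto
  also have "\<dots> = I^2 + (\<Sum>m=1..M. \<Sum>m'=1..M. \<bar>c (b * absdiff m m') - I^2\<bar>) / (real M)^2"
    using M by (simp add: sum.distrib field_simps power2_eq_square)
  finally show ?thesis unfolding c_def I_def .
qed

lemma vdc_norm_orbit_seq_single_le:
  assumes F: "cylinder_fun F L" and F1: "\<And>\<omega>. \<bar>F \<omega>\<bar> \<le> 1" and b: "b > 0"
  shows "vdc_norm [b] (orbit_seq S F) \<le> (\<integral>\<omega>. F \<omega> \<partial>\<mu>)^2"
proof (rule vdc_norm_single_le)
  define I where "I = (\<integral>\<omega>. F \<omega> \<partial>\<mu>)"
  define \<delta> where "\<delta> j = \<bar>(\<integral>\<omega>. F ((shiftT ^^ j) \<omega>) * F \<omega> \<partial>\<mu>) - I^2\<bar>" for j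
  show "\<bar>orbit_seq S F y\<bar> \<le> 1" for y using abs_orbit_seq_le F1 .
  fix \<eta> :: real assume \<eta>: "\<eta> > 0"
  have "{1..<1 + M} = {1..M}" for M :: nat by auto
  then have "(\<lambda>M. (\<Sum>m=1..M. \<Sum>m'=1..M. \<delta> (b * absdiff m m')) / (real M)^2) \<longlonglongrightarrow> 0"
    using cesaro_null_absdiff[of \<delta> b 1] cesaro_null_corr[OF F] b unfolding \<delta>_def I_def by simp
  then have "\<forall>\<^sub>F M in sequentially. M \<ge> 1 \<and> (\<Sum>m=1..M. \<Sum>m'=1..M. \<delta> (b * absdiff m m')) / (real M)^2 < \<eta> / 2"
    using \<eta> by (intro eventually_conj eventually_ge_at_top order_tendstoD(2)) auto
  then show "\<forall>\<^sub>F M in sequentially. \<forall>\<^sub>F N in sequentially.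
      sq_avg N M (\<lambda>y m. orbit_seq S F (y + int b * m)) \<le> I^2 + \<eta>"
  proof (rule eventually_mono)
    fix M assume M: "M \<ge> 1 \<and> (\<Sum>m=1..M. \<Sum>m'=1..M. \<delta> (b * absdiff m m')) / (real M)^2 < \<eta> / 2"
    define f where "f \<omega> = ((\<Sum>m=1..M. F ((shiftT ^^ (b * m)) \<omega>)) / real M)^2" for \<omega>
    have "continuous_on UNIV f"
      unfolding f_def using M
      by (intro continuous_intros cylinder_fun_continuous[OF cylinder_fun_shift[OF F]]) auto
    then have "\<forall>\<^sub>F N in sequentially. (\<Sum>n<N. f ((shiftT ^^ n) (ind_point S))) / real N < (\<integral>\<omega>. f \<omega> \<partial>\<mu>) + \<eta> / 2"
      using \<eta> by (intro order_tendstoD(2)[OF generic_avg_tendsto]) auto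
    moreover have "(\<integral>\<omega>. f \<omega> \<partial>\<mu>) \<le> I^2 + \<eta> / 2"
      using integral_sq_avg_shifts_le[OF F conjunct1[OF M], of b] M unfolding f_def \<delta>_def I_def by linarith
    ultimately show "\<forall>\<^sub>F N in sequentially. sq_avg N M (\<lambda>y m. orbit_seq S F (y + int b * m)) \<le> I^2 + \<eta>"
      unfolding sq_avg_orbit_seq f_def by (auto elim: eventually_mono)
  qed
qed

lemma sqrt_vdc_norm_orbit_seq_diff_le:
  assumes F: "cylinder_fun F L" and F1: "\<And>\<omega>. \<bar>F \<omega>\<bar> \<le> 1"
    and IH: "\<And>F' L'. cylinder_fun F' L' \<Longrightarrow> (\<And>\<omega>. \<bar>F' \<omega>\<bar> \<le> 1) \<Longrightarrow>
      vdc_norm bs (orbit_seq S F') \<le> \<bar>\<integral>\<omega>. F' \<omega> \<partial>\<mu>\<bar>"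
  shows "sqrt (vdc_norm bs (\<lambda>y. orbit_seq S F (y + int b * int h) * orbit_seq S F (y + int b * int h')))
    \<le> \<bar>\<integral>\<omega>. F \<omega> \<partial>\<mu>\<bar>
      + sqrt \<bar>(\<integral>\<omega>. F ((shiftT ^^ (b * absdiff h h')) \<omega>) * F \<omega> \<partial>\<mu>) - (\<integral>\<omega>. F \<omega> \<partial>\<mu>)^2\<bar>"
proof -
  define I where "I = (\<integral>\<omega>. F \<omega> \<partial>\<mu>)"
  define \<delta> where "\<delta> = \<bar>(\<integral>\<omega>. F ((shiftT ^^ (b * absdiff h h')) \<omega>) * F \<omega> \<partial>\<mu>) - I^2\<bar>"
  define F2 where "F2 \<omega> = F ((shiftT ^^ (b * h)) \<omega>) * F ((shiftT ^^ (b * h')) \<omega>)" for \<omega>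
  have "cylinder_fun F2 (max (L + b * h) (L + b * h'))"
    unfolding F2_def by (rule cylinder_fun_mult[OF cylinder_fun_shift[OF F] cylinder_fun_shift[OF F]])
  moreover have "\<bar>F2 \<omega>\<bar> \<le> 1" for \<omega> unfolding F2_def using F1 by (simp add: abs_mult mult_le_one)
  ultimately have "vdc_norm bs (orbit_seq S F2) \<le> \<bar>\<integral>\<omega>. F2 \<omega> \<partial>\<mu>\<bar>" by (rule IH)
  moreover have "vdc_norm bs (\<lambda>y. orbit_seq S F (y + int b * int h) * orbit_seq S F (y + int b * int h'))
      = vdc_norm bs (orbit_seq S F2)"
    unfolding F2_def by (intro vdc_norm_cong_pos orbit_seq_mult_shifts)
  ultimately have "vdc_norm bs (\<lambda>y. orbit_seq S F (y + int b * int h) * orbit_seq S F (y + int b * int h'))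
      \<le> I^2 + \<delta>"
    unfolding F2_def integral_shift_corr[OF F] absdiff_mult \<delta>_def by (smt (verit) zero_le_power2)
  then have "sqrt (vdc_norm bs (\<lambda>y. orbit_seq S F (y + int b * int h) * orbit_seq S F (y + int b * int h')))
      \<le> sqrt (I^2 + \<delta>)"
    by (rule real_sqrt_le_mono)
  also have "\<dots> \<le> sqrt (I^2) + sqrt \<delta>"
    by (rule sqrt_add_le_add_sqrt) (auto simp: \<delta>_def)
  finally show ?thesis unfolding I_def \<delta>_def by simp
qed

lemma vdc_norm_orbit_seq_cons_le:
  assumes F: "cylinder_fun F L" and F1: "\<And>\<omega>. \<bar>F \<omega>\<bar> \<le> 1" and b: "b \<ge> 1"
    and IH: "\<And>F' L'. cylinder_fun F' L' \<Longrightarrow> (\<And>\<omega>. \<bar>F' \<omega>\<bar> \<le> 1) \<Longrightarrow>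
      vdc_norm (b' # bs) (orbit_seq S F') \<le> \<bar>\<integral>\<omega>. F' \<omega> \<partial>\<mu>\<bar>"
  shows "vdc_norm (b # b' # bs) (orbit_seq S F) \<le> \<bar>\<integral>\<omega>. F \<omega> \<partial>\<mu>\<bar>"
proof (rule vdc_norm_cons_le)
  define I where "I = (\<integral>\<omega>. F \<omega> \<partial>\<mu>)"
  define \<delta> where "\<delta> j = \<bar>(\<integral>\<omega>. F ((shiftT ^^ j) \<omega>) * F \<omega> \<partial>\<mu>) - I^2\<bar>" for j
  show "\<bar>orbit_seq S F y\<bar> \<le> 1" for y using abs_orbit_seq_le F1 .
  fix \<eta> :: real assume \<eta>: "\<eta> > 0"
  have "(\<lambda>H. (\<Sum>h\<in>{0..<0 + H}. \<Sum>h'\<in>{0..<0 + H}. \<delta> (b * absdiff h h')) / (real H)^2) \<longlonglongrightarrow> 0"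
    using cesaro_null_corr[OF F] b unfolding \<delta>_def I_def by (intro cesaro_null_absdiff) auto
  then have "(\<lambda>H. sqrt ((\<Sum>h<H. \<Sum>h'<H. \<delta> (b * absdiff h h')) / (real H)^2)) \<longlonglongrightarrow> 0"
    using tendsto_real_sqrt by (fastforce simp: atLeast0LessThan)
  then have "\<forall>\<^sub>F H in sequentially. sqrt ((\<Sum>h<H. \<Sum>h'<H. \<delta> (b * absdiff h h')) / (real H)^2) < \<eta>"
    using \<eta> by (intro order_tendstoD(2)) auto
  then show "\<forall>\<^sub>F H in sequentially. (\<Sum>h<H. \<Sum>h'<H. sqrt (vdc_norm (b' # bs)
      (\<lambda>y. orbit_seq S F (y + int b * int h) * orbit_seq S F (y + int b * int h')))) / (real H)^2 \<le> \<bar>I\<bar> + \<eta>"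
  proof (rule eventually_mono)
    fix H assume H: "sqrt ((\<Sum>h<H. \<Sum>h'<H. \<delta> (b * absdiff h h')) / (real H)^2) < \<eta>"
    have "(\<Sum>h<H. \<Sum>h'<H. sqrt (vdc_norm (b' # bs)
        (\<lambda>y. orbit_seq S F (y + int b * int h) * orbit_seq S F (y + int b * int h')))) / (real H)^2
        \<le> (\<Sum>h<H. \<Sum>h'<H. \<bar>I\<bar> + sqrt (\<delta> (b * absdiff h h'))) / (real H)^2"
      using sqrt_vdc_norm_orbit_seq_diff_le[OF F F1 IH] unfolding I_def \<delta>_def
      by (intro divide_right_mono sum_mono) auto
    also have "\<dots> \<le> \<bar>I\<bar> + (\<Sum>h<H. \<Sum>h'<H. sqrt (\<delta> (b * absdiff h h'))) / (real H)^2"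
      by (cases "H = 0") (simp_all add: sum.distrib field_simps power2_eq_square)
    also have "(\<Sum>h<H. \<Sum>h'<H. sqrt (\<delta> (b * absdiff h h'))) / (real H)^2
        \<le> sqrt ((\<Sum>h<H. \<Sum>h'<H. \<delta> (b * absdiff h h')) / (real H)^2)"
      by (rule grid_avg_sqrt_le) (simp add: \<delta>_def)
    finally show "(\<Sum>h<H. \<Sum>h'<H. sqrt (vdc_norm (b' # bs)
        (\<lambda>y. orbit_seq S F (y + int b * int h) * orbit_seq S F (y + int b * int h')))) / (real H)^2 \<le> \<bar>I\<bar> + \<eta>"
      using H by simp
  qed
qed

lemma vdc_norm_orbit_seq_le:
  assumes "cylinder_fun F L" and "\<And>\<omega>. \<bar>F \<omega>\<bar> \<le> 1" and "\<forall>x\<in>set (b # bs). x > 0"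
  shows "vdc_norm (b # bs) (orbit_seq S F) \<le> \<bar>\<integral>\<omega>. F \<omega> \<partial>\<mu>\<bar>"
  using assms
proof (induction bs arbitrary: b F L)
  case Nil
  then have "\<bar>\<integral>\<omega>. F \<omega> \<partial>\<mu>\<bar> \<le> 1" by (intro abs_integral_le_1)
  then have "(\<integral>\<omega>. F \<omega> \<partial>\<mu>)^2 \<le> \<bar>\<integral>\<omega>. F \<omega> \<partial>\<mu>\<bar>"
    using power_decreasing[of 1 2 "\<bar>\<integral>\<omega>. F \<omega> \<partial>\<mu>\<bar>"] by simp
  moreover have "vdc_norm [b] (orbit_seq S F) \<le> (\<integral>\<omega>. F \<omega> \<partial>\<mu>)^2"
    using Nil by (intro vdc_norm_orbit_seq_single_le) auto
  ultimately show ?case by linarith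
next
  case (Cons b' bs)
  then show ?case by (intro vdc_norm_orbit_seq_cons_le[where L=L]) auto
qed

lemma dens_eq_integral:
  assumes "convergent (density_seq S)"
  shows "dens S = (\<integral>\<omega>. first_coord \<omega> \<partial>\<mu>)"
proof -
  have "(\<lambda>N. (\<Sum>n<N. first_coord ((shiftT ^^ n) (ind_point S))) / real N) \<longlonglongrightarrow> (\<integral>\<omega>. first_coord \<omega> \<partial>\<mu>)"
    by (rule generic_avg_tendsto[OF cylinder_fun_continuous[OF cylinder_fun_first_coord]])
  then have "density_seq S \<longlonglongrightarrow> (\<integral>\<omega>. first_coord \<omega> \<partial>\<mu>)"
    unfolding sum_first_coord_orbit density_seq_def[symmetric] by simp
  moreover have "density_seq S \<longlonglongrightarrow> dens S"
    using assms unfolding dens_def by (simp add: convergent_LIMSEQ_iff)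
  ultimately show ?thesis using LIMSEQ_unique by blast
qed

lemma vdc_norm_xi_le_0:
  assumes "convergent (density_seq S)" and "bs \<noteq> []" and "\<forall>x\<in>set bs. x > 0"
  shows "vdc_norm bs (xi S) \<le> 0"
proof -
  define F where "F \<omega> = first_coord \<omega> - dens S" for \<omega>
  have F: "cylinder_fun F 1" unfolding F_def cylinder_fun_def first_coord_def by simp
  have "\<bar>F \<omega>\<bar> \<le> 1" for \<omega> using dens_bounds[OF assms(1)] unfolding F_def first_coord_def by auto
  moreover obtain b bs' where "bs = b # bs'" using assms(2) by (cases bs) auto
  ultimately have "vdc_norm bs (xi S) \<le> \<bar>\<integral>\<omega>. F \<omega> \<partial>\<mu>\<bar>"
    using vdc_norm_orbit_seq_le[OF F] assms(3) unfolding xi_eq_orbit_seq F_def by auto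
  moreover have "(\<integral>\<omega>. F \<omega> \<partial>\<mu>) = 0"
  proof -
    interpret prob_space \<mu> by (rule prob_space_mu)
    show ?thesis
      using cylinder_fun_integrable[OF cylinder_fun_first_coord] dens_eq_integral[OF assms(1)]
      unfolding F_def by (simp add: prob_space)
  qed
  ultimately show ?thesis by simp
qed

end

lemma vdc_norm_xi_le_0_if_WM_set:
  assumes "WM_set S" and "bs \<noteq> []" and "\<forall>x\<in>set bs. x > 0"
  shows "vdc_norm bs (xi S) \<le> 0"
proof -
  from assms(1) obtain \<mu> where "wm_generic S \<mu>" and "convergent (density_seq S)"
    unfolding WM_set_def wm_generic_def by blast
  then show ?thesis using wm_generic.vdc_norm_xi_le_0 assms(2,3) by blast
qed

lemma normN_eq_sqrt_sq_avg: "normN N (\<lambda>n. (1 / real M) * (\<Sum>m=1..M. u (int n) (int m))) = sqrt (sq_avg N M u)"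
  unfolding normN_def sq_avg_def by simp

lemma eventually_sq_avg_le_if_vdc_norm_nonpos:
  fixes g :: "nat \<Rightarrow> int \<Rightarrow> real"
  assumes "vdc_controlled k a b" and "\<forall>i y. \<bar>g i y\<bar> \<le> 1"
    and "\<And>bs. bs \<noteq> [] \<Longrightarrow> \<forall>x\<in>set bs. x > 0 \<Longrightarrow> vdc_norm bs (g 0) \<le> 0" and "\<epsilon> > 0"
  shows "\<forall>\<^sub>F M in sequentially. \<forall>\<^sub>F N in sequentially.
    sq_avg N M (\<lambda>n m. \<Prod>i<k. g i (a i * n + b i * m)) \<le> \<epsilon>"
proof -
  obtain bs C where "C \<ge> 0" "bs \<noteq> []" "\<forall>x\<in>set bs. x > 0"
    and ctrl: "\<forall>\<eta>>0. \<forall>\<^sub>F M in sequentially. \<forall>c. \<forall>\<^sub>F N in sequentially.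
      sq_avg N M (\<lambda>n m. \<Prod>i<k. g i (a i * n + b i * m + c i)) \<le> C * vdc_norm bs (g 0) + \<eta>"
    using assms(1,2) unfolding vdc_controlled_def by (elim exE conjE) blast
  moreover from this have "C * vdc_norm bs (g 0) \<le> 0" using assms(3) by (simp add: mult_nonneg_nonpos)
  ultimately show ?thesis
    using ctrl[rule_format, OF assms(4)] by (auto elim!: eventually_mono allE[of _ "\<lambda>_. 0"])
qed

theorem mainTheorem13:
  fixes k :: nat and A :: "nat \<Rightarrow> nat set" and a b :: "nat \<Rightarrow> int"
  assumes "k \<ge> 1"
    and "\<forall>i<k. WM_set (A i)"
    and "\<forall>i<k. a i \<noteq> 0 \<and> b i \<noteq> 0 \<and> a i > 0"
    and "\<forall>i<k. \<forall>j<k. i \<noteq> j \<longrightarrow> a i * b j - a j * b i \<noteq> 0"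
  shows "\<forall>\<epsilon>>0. \<exists>M\<^sub>0. \<forall>M\<ge>M\<^sub>0. \<exists>N\<^sub>0. \<forall>N\<ge>N\<^sub>0.
           normN N (\<lambda>n. (1 / real M) * (\<Sum>m=1..M. \<Prod>i<k. xi (A i) (a i * int n + b i * int m))) < \<epsilon>"
proof (intro allI impI)
  fix \<epsilon> :: real assume \<epsilon>: "\<epsilon> > 0"
  define g where "g i = (if i < k then xi (A i) else (\<lambda>_. 0))" for i
  have g: "\<forall>i y. \<bar>g i y\<bar> \<le> 1" using assms(2) abs_xi_le_1 unfolding g_def WM_set_def by simp
  have "g 0 = xi (A 0)" using assms(1) unfolding g_def by simp
  then have g0: "vdc_norm bs (g 0) \<le> 0" if "bs \<noteq> []" "\<forall>x\<in>set bs. x > 0" for bs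
    using vdc_norm_xi_le_0_if_WM_set assms(1,2) that by simp
  obtain k' where "k = Suc k'" using assms(1) by (cases k) auto
  then have "vdc_controlled k a b"
    using assms(3,4) vdc_controlled_if_nondegenerate unfolding nondegenerate_def by auto
  moreover have "(\<lambda>n m. \<Prod>i<k. g i (a i * n + b i * m)) = (\<lambda>n m. \<Prod>i<k. xi (A i) (a i * n + b i * m))"
    unfolding g_def by (intro ext prod.cong) auto
  ultimately have "\<forall>\<^sub>F M in sequentially. \<forall>\<^sub>F N in sequentially.
      sq_avg N M (\<lambda>n m. \<Prod>i<k. xi (A i) (a i * n + b i * m)) \<le> \<epsilon>^2 / 2"
    using eventually_sq_avg_le_if_vdc_norm_nonpos[OF _ g g0, of k a b "\<epsilon>^2 / 2"] \<epsilon> by simp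
  moreover have "sqrt (\<epsilon>^2 / 2) < \<epsilon>" using real_sqrt_less_mono[of "\<epsilon>^2 / 2" "\<epsilon>^2"] \<epsilon> by simp
  ultimately have "\<forall>\<^sub>F M in sequentially. \<forall>\<^sub>F N in sequentially.
      sqrt (sq_avg N M (\<lambda>n m. \<Prod>i<k. xi (A i) (a i * n + b i * m))) < \<epsilon>"
    by (elim eventually_mono) (meson real_sqrt_le_mono le_less_trans)
  moreover have "normN N (\<lambda>n. (1 / real M) * (\<Sum>m=1..M. \<Prod>i<k. xi (A i) (a i * int n + b i * int m)))
      = sqrt (sq_avg N M (\<lambda>n m. \<Prod>i<k. xi (A i) (a i * n + b i * m)))" for N M
    using normN_eq_sqrt_sq_avg[where u="\<lambda>n m. \<Prod>i<k. xi (A i) (a i * n + b i * m)"] by simp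
  ultimately show "\<exists>M\<^sub>0. \<forall>M\<ge>M\<^sub>0. \<exists>N\<^sub>0. \<forall>N\<ge>N\<^sub>0.
      normN N (\<lambda>n. (1 / real M) * (\<Sum>m=1..M. \<Prod>i<k. xi (A i) (a i * int n + b i * int m))) < \<epsilon>"
    unfolding eventually_sequentially by simp
qed
end
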